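(* Let $\mathcal{H}$ be a complex Hilbert space and let $T\in\mathcal{B}(\mathcal{H})$ be a completely hyperexpansive operator which is $A_j(T)$-regular for $j=1,2,3$, where $A_n(T)=-\sum_{k=0}^n(-1)^k\binom{n}{k}T^{*k}T^k$. Then the compression $P_{\overline{\mathcal{R}(A_2(T))}}T|_{\overline{\mathcal{R}(A_2(T))}}$ of $T$ to $\overline{\mathcal{R}(A_2(T))}$ is a completely non-isometric quasinormal contraction.
   Context: $T$ is completely hyperexpansive if $\sum_{k=0}^n(-1)^k\binom{n}{k}T^{*k}T^k\le0$ for all $n\ge1$; note $A_1(T)=T^*T-I$. For a positive operator $A$, $T$ is $A$-regular if $AT=A^{1/2}TA^{1/2}$. An operator $Q$ is quasinormal if $QQ^*Q=Q^*Q^2$. A contraction is completely non-isometric if there is no nonzero invariant subspace on which it acts isometrically. *)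

theory Defs
  imports "HOL-Analysis.Analysis"
begin

text \<open>HOL-Analysis only provides real inner product spaces. A complex Hilbert space
is modelled as a complete real normed vector space carrying a complex scalar
multiplication and a complex inner product (linear in the second argument,
conjugate-linear in the first) that induces the norm.\<close>

class chilbert = real_normed_vector + complete_space +
  fixes cscale :: "complex \<Rightarrow> 'a \<Rightarrow> 'a"
    and cinner :: "'a \<Rightarrow> 'a \<Rightarrow> complex"
  assumes cscale_add_right: "cscale a (x + y) = cscale a x + cscale a y"
    and cscale_add_left: "cscale (a + b) x = cscale a x + cscale b x"
    and cscale_cscale: "cscale a (cscale b x) = cscale (a * b) x"
    and cscale_one: "cscale 1 x = x"
    and scaleR_cscale: "scaleR r x = cscale (complex_of_real r) x"
    and cinner_add_left: "cinner (x + y) z = cinner x z + cinner y z"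
    and cinner_cscale_left: "cinner (cscale a x) y = cnj a * cinner x y"
    and cinner_commute: "cinner y x = cnj (cinner x y)"
    and cinner_self: "cinner x x = complex_of_real ((norm x)\<^sup>2)"

text \<open>Consistency check: the complex numbers form a complex Hilbert space.\<close>
instantiation complex :: chilbert
begin
definition cscale_complex :: "complex \<Rightarrow> complex \<Rightarrow> complex" where
  "cscale_complex a x = a * x"
definition cinner_complex :: "complex \<Rightarrow> complex \<Rightarrow> complex" where
  "cinner_complex x y = cnj x * y"
instance
proof
  fix a b :: complex and x y z :: complex and r :: real
  show "cscale a (x + y) = cscale a x + cscale a y"
    by (simp add: cscale_complex_def distrib_left)
  show "cscale (a + b) x = cscale a x + cscale b x"
    by (simp add: cscale_complex_def distrib_right)
  show "cscale a (cscale b x) = cscale (a * b) x"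
    by (simp add: cscale_complex_def mult.assoc)
  show "cscale 1 x = x"
    by (simp add: cscale_complex_def)
  show "r *\<^sub>R x = cscale (complex_of_real r) x"
    by (simp add: cscale_complex_def scaleR_conv_of_real)
  show "cinner (x + y) z = cinner x z + cinner y z"
    by (simp add: cinner_complex_def distrib_right)
  show "cinner (cscale a x) y = cnj a * cinner x y"
    by (simp add: cinner_complex_def cscale_complex_def mult.assoc)
  show "cinner y x = cnj (cinner x y)"
    by (simp add: cinner_complex_def mult.commute)
  show "cinner x x = complex_of_real ((norm x)\<^sup>2)"
    unfolding cinner_complex_def by (metis complex_norm_square mult.commute of_real_power)
qed
end

definition clinear_op :: "('a::chilbert \<Rightarrow> 'a) \<Rightarrow> bool" where
  "clinear_op T \<longleftrightarrow> (\<forall>x y. T (x + y) = T x + T y) \<and> (\<forall>a x. T (cscale a x) = cscale a (T x))"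

definition bounded_op :: "('a::chilbert \<Rightarrow> 'a) \<Rightarrow> bool" where
  "bounded_op T \<longleftrightarrow> clinear_op T \<and> (\<exists>K. \<forall>x. norm (T x) \<le> K * norm x)"

text \<open>Hilbert space adjoint T^* (unique; exists for bounded operators by Riesz).\<close>
definition adj :: "('a::chilbert \<Rightarrow> 'a) \<Rightarrow> ('a \<Rightarrow> 'a)" where
  "adj T = (SOME S. \<forall>x y. cinner (T x) y = cinner x (S y))"

definition positive_op :: "('a::chilbert \<Rightarrow> 'a) \<Rightarrow> bool" where
  "positive_op A \<longleftrightarrow> bounded_op A \<and> (\<forall>x. Im (cinner x (A x)) = 0 \<and> Re (cinner x (A x)) \<ge> 0)"

definition op_sqrt :: "('a::chilbert \<Rightarrow> 'a) \<Rightarrow> ('a \<Rightarrow> 'a)" where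
  "op_sqrt A = (THE S. positive_op S \<and> S \<circ> S = A)"

definition A_op :: "nat \<Rightarrow> ('a::chilbert \<Rightarrow> 'a) \<Rightarrow> ('a \<Rightarrow> 'a)" where
  "A_op n T = (\<lambda>x. - (\<Sum>k\<le>n. cscale ((-1) ^ k * of_nat (n choose k))
                              ((adj T ^^ k) ((T ^^ k) x))))"

text \<open>Completely hyperexpansive: \<open>\<Sum>_{k=0}^n (-1)^k (n choose k) T^{*k}T^k \<le> 0\<close> for all
  \<open>n \<ge> 1\<close>, i.e. \<open>A_n(T) \<ge> 0\<close>.\<close>
definition completely_hyperexpansive :: "('a::chilbert \<Rightarrow> 'a) \<Rightarrow> bool" where
  "completely_hyperexpansive T \<longleftrightarrow> (\<forall>n\<ge>1. positive_op (A_op n T))"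

definition regular :: "('a::chilbert \<Rightarrow> 'a) \<Rightarrow> ('a \<Rightarrow> 'a) \<Rightarrow> bool" where
  "regular A T \<longleftrightarrow> A \<circ> T = op_sqrt A \<circ> T \<circ> op_sqrt A"

definition csubspace :: "'a::chilbert set \<Rightarrow> bool" where
  "csubspace M \<longleftrightarrow> 0 \<in> M \<and> (\<forall>x\<in>M. \<forall>y\<in>M. x + y \<in> M) \<and> (\<forall>a. \<forall>x\<in>M. cscale a x \<in> M)"

definition proj :: "'a::chilbert set \<Rightarrow> 'a \<Rightarrow> 'a" where
  "proj M x = (THE p. p \<in> M \<and> (\<forall>m\<in>M. cinner m (x - p) = 0))"

text \<open>Compression \<open>P_M T|_M\<close> (considered as an operator on M).\<close>
definition compression :: "'a::chilbert set \<Rightarrow> ('a \<Rightarrow> 'a) \<Rightarrow> ('a \<Rightarrow> 'a)" where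
  "compression M T = (\<lambda>x. proj M (T x))"

text \<open>Adjoint of an operator C acting on the Hilbert space M (values outside M irrelevant).\<close>
definition adj_on :: "'a::chilbert set \<Rightarrow> ('a \<Rightarrow> 'a) \<Rightarrow> ('a \<Rightarrow> 'a)" where
  "adj_on M C = (SOME S. (\<forall>y\<in>M. S y \<in> M) \<and> (\<forall>x\<in>M. \<forall>y\<in>M. cinner (C x) y = cinner x (S y)))"

definition contraction_on :: "'a::chilbert set \<Rightarrow> ('a \<Rightarrow> 'a) \<Rightarrow> bool" where
  "contraction_on M C \<longleftrightarrow> (\<forall>x\<in>M. norm (C x) \<le> norm x)"

definition quasinormal_on :: "'a::chilbert set \<Rightarrow> ('a \<Rightarrow> 'a) \<Rightarrow> bool" where
  "quasinormal_on M Q \<longleftrightarrow> (\<forall>x\<in>M. Q (adj_on M Q (Q x)) = adj_on M Q (Q (Q x)))"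

definition completely_non_isometric_on :: "'a::chilbert set \<Rightarrow> ('a \<Rightarrow> 'a) \<Rightarrow> bool" where
  "completely_non_isometric_on M C \<longleftrightarrow>
     \<not> (\<exists>N. csubspace N \<and> closed N \<and> N \<subseteq> M \<and> N \<noteq> {0} \<and> C ` N \<subseteq> N
            \<and> (\<forall>x\<in>N. norm (C x) = norm x))"

end

theory Submission
  imports Defs "HOL-Computational_Algebra.Formal_Power_Series"
begin

text \<open>
  Write \<open>A\<^sub>n\<close> for \<open>A_op n T\<close>, \<open>M\<close> for the closure of the range of \<open>A\<^sub>2\<close>,
  \<open>S\<close> for the positive square root of \<open>A\<^sub>2\<close> and \<open>C\<close> for the compression of \<open>T\<close>
  to \<open>M\<close>. The recursion \<open>A\<^sub>n\<^sub>+\<^sub>1 = A\<^sub>n - T\<^sup>* A\<^sub>n T\<close> and positivity of all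
  \<open>A\<^sub>n\<close> show that \<open>A\<^sub>2\<close> and \<open>A\<^sub>3\<close> have the same kernel, and that the numbers
  \<open>\<langle>T\<^sup>k z, A\<^sub>2 T\<^sup>k z\<rangle>\<close> telescope against \<open>\<langle>z, A\<^sub>1 z\<rangle>\<close>, so they are
  summable in \<open>k\<close>.

  Regularity of \<open>T\<close> for \<open>A\<^sub>2\<close> gives \<open>C S = S T\<close>. Hence
  \<open>\<parallel>C S z\<parallel>\<^sup>2 = \<langle>T z, A\<^sub>2 T z\<rangle> \<le> \<langle>z, A\<^sub>2 z\<rangle> = \<parallel>S z\<parallel>\<^sup>2\<close>, and as the
  range of \<open>S\<close> is dense in \<open>M\<close>, \<open>C\<close> is a contraction; moreover
  \<open>\<parallel>C\<^sup>k S z\<parallel>\<^sup>2 = \<langle>T\<^sup>k z, A\<^sub>2 T\<^sup>k z\<rangle> \<longlonglongrightarrow> 0\<close>, which excludes a nonzero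
  isometric invariant subspace. Finally \<open>T\<^sup>*\<close> leaves \<open>M\<close> invariant and restricts to
  \<open>C\<^sup>*\<close>, and \<open>A\<^sub>3 = S (I - C\<^sup>*C) S\<close>; regularity for \<open>A\<^sub>3\<close> and \<open>A\<^sub>2\<close> makes
  \<open>T\<^sup>*\<close> commute with \<open>I - C\<^sup>*C\<close> on \<open>M\<close>, so \<open>C\<^sup>*\<close> commutes with \<open>C\<^sup>*C\<close>,
  which is quasinormality of \<open>C\<close>.

  Square roots of positive operators are obtained from the binomial series of
  \<open>(1 - t)\<^sup>1\<^sup>/\<^sup>2\<close>.
\<close>

section \<open>Inner product algebra\<close>

instance chilbert \<subseteq> banach ..

lemma cinner_add_right: "cinner x (y + z) = cinner x y + cinner x z"
  by (metis cinner_add_left cinner_commute complex_cnj_add)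

lemma cinner_cscale_right: "cinner x (cscale a y) = a * cinner x y"
  by (metis cinner_cscale_left cinner_commute complex_cnj_cnj complex_cnj_mult)

lemma cscale_zero_right [simp]: "cscale a 0 = 0"
proof -
  have "cscale a 0 + cscale a 0 = cscale a 0 + 0" using cscale_add_right[of a 0 0] by simp
  thus ?thesis by (simp only: add_left_cancel)
qed

lemma cscale_zero_left [simp]: "cscale 0 x = 0"
proof -
  have "cscale 0 x + cscale 0 x = cscale 0 x + 0" using cscale_add_left[of 0 0 x] by simp
  thus ?thesis by (simp only: add_left_cancel)
qed

lemma cscale_minus_right: "cscale a (- x) = - cscale a x"
proof -
  have "cscale a (- x) + cscale a x = 0"
    by (simp flip: cscale_add_right)
  thus ?thesis by (simp add: add_eq_0_iff)
qed

lemma cscale_minus_left: "cscale (- a) x = - cscale a x"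
proof -
  have "cscale (- a) x + cscale a x = 0"
    by (simp flip: cscale_add_left)
  thus ?thesis by (simp add: add_eq_0_iff)
qed

lemma cscale_diff_right: "cscale a (x - y) = cscale a x - cscale a y"
  by (simp only: diff_conv_add_uminus cscale_add_right cscale_minus_right)

lemma cscale_diff_left: "cscale (a - b) x = cscale a x - cscale b x"
  by (simp only: diff_conv_add_uminus cscale_add_left cscale_minus_left)

lemma cscale_scaleR_commute: "cscale a (r *\<^sub>R x) = r *\<^sub>R cscale a x"
  by (simp add: scaleR_cscale cscale_cscale mult.commute)

lemma cscale_sum_right: "cscale a (sum f A) = (\<Sum>i\<in>A. cscale a (f i))"
  by (induction A rule: infinite_finite_induct)
     (auto simp: cscale_add_right)

lemma cinner_zero_right [simp]: "cinner x 0 = 0"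
proof -
  have "cinner x 0 + cinner x 0 = cinner x 0 + 0" using cinner_add_right[of x 0 0] by simp
  thus ?thesis by simp
qed

lemma cinner_zero_left [simp]: "cinner 0 y = 0"
  by (metis cinner_commute cinner_zero_right complex_cnj_zero)

lemma cinner_minus_right: "cinner x (- y) = - cinner x y"
proof -
  have "cinner x (- y) + cinner x y = 0" by (simp flip: cinner_add_right)
  thus ?thesis by (simp add: eq_neg_iff_add_eq_0)
qed

lemma cinner_diff_right: "cinner x (y - z) = cinner x y - cinner x z"
  by (simp only: diff_conv_add_uminus cinner_add_right cinner_minus_right)

lemma cinner_scaleR_left: "cinner (r *\<^sub>R x) y = complex_of_real r * cinner x y"
  by (simp add: scaleR_cscale cinner_cscale_left)

lemma cinner_scaleR_right: "cinner x (r *\<^sub>R y) = complex_of_real r * cinner x y"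
  by (simp add: scaleR_cscale cinner_cscale_right)

lemma Re_cinner_self: "Re (cinner x x) = (norm x)\<^sup>2"
  by (simp add: cinner_self)

lemma cinner_self_eq_zero [simp]: "cinner x x = 0 \<longleftrightarrow> x = 0"
  by (simp add: cinner_self)

lemma cinner_eq_zero_imp_zero: "(\<And>y. cinner y x = 0) \<Longrightarrow> x = 0"
  using cinner_self_eq_zero by blast

lemma cinner_right_ext: "(\<And>y. cinner y x = cinner y z) \<Longrightarrow> x = z"
  using cinner_eq_zero_imp_zero[of "x - z"] by (simp add: cinner_diff_right)

lemma norm_cscale: "norm (cscale a x) = cmod a * norm x"
proof -
  have "complex_of_real ((norm (cscale a x))\<^sup>2) = cnj a * a * complex_of_real ((norm x)\<^sup>2)"
    by (metis cinner_cscale_left cinner_cscale_right cinner_self mult.assoc)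
  also have "cnj a * a = complex_of_real ((cmod a)\<^sup>2)"
    by (metis complex_norm_square mult.commute)
  finally have "(norm (cscale a x))\<^sup>2 = ((cmod a) * norm x)\<^sup>2"
    by (metis of_real_eq_iff of_real_mult power_mult_distrib)
  thus ?thesis by (simp add: power2_eq_iff_nonneg)
qed

lemma norm_add_power2: "(norm (x + y))\<^sup>2 = (norm x)\<^sup>2 + (norm y)\<^sup>2 + 2 * Re (cinner x y)"
proof -
  have "cinner (x + y) (x + y) = cinner x x + cinner y y + (cinner x y + cnj (cinner x y))"
    by (simp add: cinner_add_left cinner_add_right algebra_simps flip: cinner_commute)
  thus ?thesis by (simp flip: Re_cinner_self)
qed

lemma pythagoras: "cinner x y = 0 \<Longrightarrow> (norm (x + y))\<^sup>2 = (norm x)\<^sup>2 + (norm y)\<^sup>2"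
  by (simp add: norm_add_power2)

lemma parallelogram_law:
  fixes u v :: "'a::chilbert"
  shows "(norm (u + v))\<^sup>2 + (norm (u - v))\<^sup>2 = 2 * (norm u)\<^sup>2 + 2 * (norm v)\<^sup>2"
  using norm_add_power2[of u v] norm_add_power2[of u "- v"] by (simp add: cinner_minus_right)

lemma cinner_cauchy_schwarz: "cmod (cinner x y) \<le> norm x * norm y"
proof (cases "x = 0")
  case True thus ?thesis by simp
next
  case False
  define t where "t = cinner x y / complex_of_real ((norm x)\<^sup>2)"
  define z where "z = y - cscale t x"
  have nx: "norm x \<noteq> 0" using False by simp
  have "cinner x z = cinner x y - t * cinner x x"
    by (simp add: z_def cinner_diff_right cinner_cscale_right)
  also have "\<dots> = 0" using nx by (simp add: t_def cinner_self)
  finally have "cinner (cscale t x) z = 0" by (simp add: cinner_cscale_left)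
  hence "(norm y)\<^sup>2 = (norm (cscale t x))\<^sup>2 + (norm z)\<^sup>2"
    using pythagoras[of "cscale t x" z] by (simp add: z_def)
  hence "(cmod t * norm x)\<^sup>2 \<le> (norm y)\<^sup>2" by (simp add: norm_cscale)
  hence "cmod t * norm x \<le> norm y"
    using power2_le_imp_le by fastforce
  moreover have "cmod t * norm x = cmod (cinner x y) / norm x"
    using nx by (simp add: t_def norm_divide power2_eq_square norm_mult)
  ultimately show ?thesis using nx by (simp add: divide_le_eq mult.commute)
qed

lemma bounded_linear_cscale: "bounded_linear (cscale a)"
  by (rule bounded_linear_intro[where K="cmod a"])
     (auto simp: cscale_add_right cscale_scaleR_commute norm_cscale)

lemma bounded_linear_cinner_right: "bounded_linear (cinner x)"
  by (rule bounded_linear_intro[where K="norm x"])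
     (auto simp: cinner_add_right cinner_scaleR_right scaleR_conv_of_real mult.commute
       intro: order_trans[OF cinner_cauchy_schwarz])

lemma closed_cinner_eq_zero: "closed {x. cinner k x = 0}"
  using bounded_linear.continuous_on[OF bounded_linear_cinner_right continuous_on_id]
  by (intro closed_Collect_eq) (auto intro: continuous_intros)

section \<open>Orthogonal projection onto a closed subspace\<close>

lemma csubspace_add: "csubspace M \<Longrightarrow> x \<in> M \<Longrightarrow> y \<in> M \<Longrightarrow> x + y \<in> M"
  by (simp add: csubspace_def)

lemma csubspace_cscale: "csubspace M \<Longrightarrow> x \<in> M \<Longrightarrow> cscale a x \<in> M"
  by (simp add: csubspace_def)

lemma csubspace_scaleR: "csubspace M \<Longrightarrow> x \<in> M \<Longrightarrow> r *\<^sub>R x \<in> M"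
  by (simp add: csubspace_def scaleR_cscale)

lemma csubspace_diff: "csubspace M \<Longrightarrow> x \<in> M \<Longrightarrow> y \<in> M \<Longrightarrow> x - y \<in> M"
  using csubspace_scaleR[of M y "-1"] unfolding csubspace_def
  by (metis diff_conv_add_uminus scaleR_minus1_left)

lemma minimizing_sequence_Cauchy:
  fixes x :: "'a::chilbert"
  assumes M: "csubspace M"
    and s: "\<And>n. s n \<in> M" "\<And>n. norm (x - s n) < infdist x M + inverse (real (Suc n))"
  shows "Cauchy s"
proof (rule CauchyI)
  define d where "d = infdist x M"
  have d0: "0 \<le> d" by (simp add: d_def infdist_nonneg)
  have midpoint: "(norm (s i - s j))\<^sup>2 \<le> 2 * (norm (x - s i))\<^sup>2 + 2 * (norm (x - s j))\<^sup>2 - 4 * d\<^sup>2"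
    for i j
  proof -
    have "(1/2::real) *\<^sub>R (s i + s j) \<in> M"
      using M s(1) by (simp add: csubspace_scaleR csubspace_add)
    hence "d \<le> norm (x - (1/2::real) *\<^sub>R (s i + s j))"
      unfolding d_def by (metis infdist_le dist_norm)
    also have "\<dots> = norm ((x - s i) + (x - s j)) / 2"
    proof -
      have "(x - s i) + (x - s j) = 2 *\<^sub>R (x - (1/2::real) *\<^sub>R (s i + s j))"
        by (simp add: algebra_simps scaleR_2)
      thus ?thesis by simp
    qed
    finally have "(2 * d)\<^sup>2 \<le> (norm ((x - s i) + (x - s j)))\<^sup>2"
      using d0 by (intro power_mono) auto
    thus ?thesis
      using parallelogram_law[of "x - s i" "x - s j"] by (simp add: norm_minus_commute)
  qed
  fix e :: real assume e: "0 < e"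
  obtain N where N: "inverse (real (Suc N)) < e\<^sup>2 / (4 * (2 * d + 1))"
    using reals_Archimedean e d0 by (metis divide_pos_pos mult_pos_pos zero_less_numeral
        zero_less_power add_nonneg_pos mult_nonneg_nonneg zero_le_numeral zero_less_one)
  show "\<exists>M. \<forall>m\<ge>M. \<forall>n\<ge>M. norm (s m - s n) < e"
  proof (intro exI allI impI)
    fix i j assume ij: "N \<le> i" "N \<le> j"
    define h where "h = inverse (real (Suc N))"
    have h0: "0 < h" "h \<le> 1" by (auto simp: h_def inverse_le_1_iff)
    have near: "(norm (x - s k))\<^sup>2 \<le> (d + h)\<^sup>2" if "N \<le> k" for k
    proof -
      have "inverse (real (Suc k)) \<le> h" using that by (auto simp: h_def intro!: le_imp_inverse_le)
      thus ?thesis using s(2)[of k] by (intro power_mono) (auto simp: d_def)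
    qed
    have "(norm (s i - s j))\<^sup>2 \<le> 4 * ((d + h)\<^sup>2 - d\<^sup>2)"
      using midpoint[of i j] near[OF ij(1)] near[OF ij(2)] by simp
    also have "\<dots> = 4 * h * (2 * d + h)" by (simp add: power2_eq_square algebra_simps)
    also have "\<dots> \<le> 4 * h * (2 * d + 1)" using h0 d0 by simp
    also have "\<dots> < e\<^sup>2" using N d0 unfolding h_def[symmetric] by (simp add: field_simps)
    finally show "norm (s i - s j) < e" using e by (simp add: power_less_imp_less_base)
  qed
qed

lemma nearest_point_exists:
  fixes x :: "'a::chilbert"
  assumes M: "csubspace M" "closed M"
  obtains p where "p \<in> M" "norm (x - p) = infdist x M"
proof -
  define d where "d = infdist x M"
  have ne: "M \<noteq> {}" using M(1) by (auto simp: csubspace_def)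
  have "\<exists>m\<in>M. norm (x - m) < d + inverse (real (Suc n))" for n
  proof -
    have "infdist x M < d + inverse (real (Suc n))" by (simp add: d_def)
    moreover have "bdd_below ((\<lambda>m. dist x m) ` M)" by (rule bdd_belowI[of _ 0]) auto
    ultimately show ?thesis
      unfolding infdist_notempty[OF ne] dist_norm by (simp add: cINF_less_iff[OF ne])
  qed
  then obtain s where s: "\<And>n. s n \<in> M" "\<And>n. norm (x - s n) < d + inverse (real (Suc n))"
    by metis
  obtain p where p: "s \<longlonglongrightarrow> p"
    using minimizing_sequence_Cauchy[OF M(1) s[unfolded d_def]] Cauchy_convergent_iff convergent_def
    by blast
  have "p \<in> M" using closed_sequentially[OF M(2)] s(1) p by blast
  moreover have "(\<lambda>n. norm (x - s n)) \<longlonglongrightarrow> d"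
  proof (rule real_tendsto_sandwich[of "\<lambda>n. d" _ _ "\<lambda>n. d + inverse (real (Suc n))"])
    show "\<forall>\<^sub>F n in sequentially. d \<le> norm (x - s n)"
      using s(1) by (intro always_eventually allI) (metis d_def infdist_le dist_norm)
    show "\<forall>\<^sub>F n in sequentially. norm (x - s n) \<le> d + inverse (real (Suc n))"
      using s(2) by (intro always_eventually allI less_imp_le) auto
    show "(\<lambda>n. d + inverse (real (Suc n))) \<longlonglongrightarrow> d"
      using tendsto_add[OF tendsto_const LIMSEQ_inverse_real_of_nat, of d] by simp
  qed simp
  moreover have "(\<lambda>n. norm (x - s n)) \<longlonglongrightarrow> norm (x - p)" by (intro tendsto_intros p)
  ultimately show thesis using that LIMSEQ_unique d_def by blast
qed

lemma nearest_point_orthogonal: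
  fixes x :: "'a::chilbert"
  assumes M: "csubspace M" and p: "p \<in> M" "norm (x - p) = infdist x M" and m: "m \<in> M"
  shows "cinner m (x - p) = 0"
proof (rule ccontr)
  define w where "w = x - p"
  define c where "c = cinner m w"
  define t where "t = c / complex_of_real ((norm m)\<^sup>2)"
  assume "cinner m (x - p) \<noteq> 0"
  hence c0: "c \<noteq> 0" and nm: "norm m \<noteq> 0" by (auto simp: c_def w_def)
  have "p + cscale t m \<in> M" using M p m by (simp add: csubspace_add csubspace_cscale)
  hence "infdist x M \<le> norm (x - (p + cscale t m))" by (metis infdist_le dist_norm)
  hence "norm w \<le> norm (w + - cscale t m)" using p(2) by (simp add: w_def algebra_simps)
  hence "(norm w)\<^sup>2 \<le> (norm (w + - cscale t m))\<^sup>2" by (simp add: power_mono)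
  also have "\<dots> = (norm w)\<^sup>2 + (cmod t * norm m)\<^sup>2 + 2 * Re (cinner w (- cscale t m))"
    using norm_add_power2[of w "- cscale t m"] by (simp add: norm_cscale)
  also have "cinner w (- cscale t m) = - (t * cnj c)"
    by (simp add: cinner_minus_right cinner_cscale_right c_def cinner_commute[of m w])
  also have "t * cnj c = complex_of_real ((cmod c)\<^sup>2 / (norm m)\<^sup>2)"
    by (simp add: t_def complex_norm_square[symmetric])
  also have "(cmod t * norm m)\<^sup>2 = (cmod c)\<^sup>2 / (norm m)\<^sup>2"
    using nm by (simp add: t_def norm_divide power2_eq_square norm_mult)
  finally have "(cmod c)\<^sup>2 \<le> 0" using nm by (simp add: divide_le_0_iff)
  thus False using c0 by simp
qed

lemma orthogonal_residual_unique:
  assumes M: "csubspace M"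
    and p: "p \<in> M" "\<forall>m\<in>M. cinner m (x - p) = 0"
    and q: "q \<in> M" "\<forall>m\<in>M. cinner m (x - q) = 0"
  shows "p = q"
proof -
  have "cinner (p - q) ((x - q) - (x - p)) = 0"
    using p q csubspace_diff[OF M] by (simp add: cinner_diff_right)
  thus ?thesis by simp
qed

locale closed_subspace =
  fixes M :: "'a::chilbert set"
  assumes subspace: "csubspace M" and closed: "closed M"
begin

lemma proj_in_orthogonal: "proj M x \<in> M \<and> (\<forall>m\<in>M. cinner m (x - proj M x) = 0)"
proof -
  obtain p where "p \<in> M" "norm (x - p) = infdist x M" using nearest_point_exists subspace closed .
  hence "\<exists>!p. p \<in> M \<and> (\<forall>m\<in>M. cinner m (x - p) = 0)"
    using nearest_point_orthogonal[OF subspace] orthogonal_residual_unique[OF subspace] by blast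
  thus ?thesis unfolding proj_def by (rule theI')
qed

lemma proj_in: "proj M x \<in> M"
  using proj_in_orthogonal by blast

lemma proj_orthogonal: "m \<in> M \<Longrightarrow> cinner m (x - proj M x) = 0"
  using proj_in_orthogonal by blast

lemma proj_eqI: "p \<in> M \<Longrightarrow> (\<And>m. m \<in> M \<Longrightarrow> cinner m (x - p) = 0) \<Longrightarrow> proj M x = p"
  using orthogonal_residual_unique[OF subspace] proj_in_orthogonal by blast

lemma proj_id: "x \<in> M \<Longrightarrow> proj M x = x"
  by (rule proj_eqI) auto

lemma cinner_proj_right: "m \<in> M \<Longrightarrow> cinner m (proj M x) = cinner m x"
  using proj_orthogonal[of m x] by (simp add: cinner_diff_right)

lemma cinner_proj_left: "m \<in> M \<Longrightarrow> cinner (proj M x) m = cinner x m"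
  by (metis cinner_proj_right cinner_commute)

lemma proj_selfadjoint: "cinner (proj M x) y = cinner x (proj M y)"
  by (metis proj_in cinner_proj_right cinner_proj_left)

lemma proj_eq_zero: "(\<And>m. m \<in> M \<Longrightarrow> cinner m x = 0) \<Longrightarrow> proj M x = 0"
  using subspace by (intro proj_eqI) (auto simp: csubspace_def)

lemma proj_add: "proj M (x + y) = proj M x + proj M y"
  by (rule proj_eqI) (auto intro!: csubspace_add[OF subspace] proj_in
      simp: cinner_diff_right cinner_add_right cinner_proj_right)

lemma proj_cscale: "proj M (cscale a x) = cscale a (proj M x)"
  by (rule proj_eqI) (auto intro!: csubspace_cscale[OF subspace] proj_in
      simp: cinner_diff_right cinner_cscale_right cinner_proj_right)

lemma proj_diff: "proj M (x - y) = proj M x - proj M y"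
  by (rule proj_eqI) (auto intro!: csubspace_diff[OF subspace] proj_in
      simp: cinner_diff_right cinner_proj_right)

lemma norm_proj_le: "norm (proj M x) \<le> norm x"
proof -
  have "cinner (proj M x) (x - proj M x) = 0" by (rule proj_orthogonal[OF proj_in])
  hence "(norm x)\<^sup>2 = (norm (proj M x))\<^sup>2 + (norm (x - proj M x))\<^sup>2"
    using pythagoras[of "proj M x" "x - proj M x"] by simp
  hence "(norm (proj M x))\<^sup>2 \<le> (norm x)\<^sup>2" by simp
  thus ?thesis by (rule power2_le_imp_le) simp
qed

lemma bounded_linear_proj: "bounded_linear (proj M)"
  by (rule bounded_linear_intro[where K=1])
     (auto simp: proj_add scaleR_cscale proj_cscale norm_proj_le)

end

lemma closure_csubspace:
  fixes S :: "'a::chilbert set"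
  assumes S: "csubspace S"
  shows "csubspace (closure S)"
  unfolding csubspace_def
proof (intro conjI ballI allI)
  show "0 \<in> closure S" using S closure_subset by (fastforce simp: csubspace_def)
next
  fix x y assume "x \<in> closure S" "y \<in> closure S"
  then obtain f g where f: "\<And>n. f n \<in> S" "f \<longlonglongrightarrow> x" and g: "\<And>n. g n \<in> S" "g \<longlonglongrightarrow> y"
    unfolding closure_sequential by blast
  have "(\<lambda>n. f n + g n) \<longlonglongrightarrow> x + y" using f g by (intro tendsto_add)
  moreover have "f n + g n \<in> S" for n using f g S by (simp add: csubspace_add)
  ultimately show "x + y \<in> closure S" unfolding closure_sequential
    by (intro exI[where x="\<lambda>n. f n + g n"]) auto
next
  fix a x assume "x \<in> closure S"
  then obtain f where f: "\<And>n. f n \<in> S" "f \<longlonglongrightarrow> x"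
    unfolding closure_sequential by blast
  have "(\<lambda>n. cscale a (f n)) \<longlonglongrightarrow> cscale a x"
    using bounded_linear.tendsto[OF bounded_linear_cscale f(2)] .
  moreover have "cscale a (f n) \<in> S" for n using f S by (simp add: csubspace_cscale)
  ultimately show "cscale a x \<in> closure S" unfolding closure_sequential
    by (intro exI[where x="\<lambda>n. cscale a (f n)"]) auto
qed

section \<open>Bounded operators and adjoints\<close>

lemma clinear_add: "clinear_op T \<Longrightarrow> T (x + y) = T x + T y"
  by (simp add: clinear_op_def)

lemma clinear_cscale: "clinear_op T \<Longrightarrow> T (cscale a x) = cscale a (T x)"
  by (simp add: clinear_op_def)

lemma clinear_scaleR: "clinear_op T \<Longrightarrow> T (r *\<^sub>R x) = r *\<^sub>R (T x)"
  by (simp add: clinear_op_def scaleR_cscale)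

lemma clinear_zero: "clinear_op T \<Longrightarrow> T 0 = 0"
  using clinear_scaleR[of T 0 0] by simp

lemma clinear_minus: "clinear_op T \<Longrightarrow> T (- x) = - T x"
  using clinear_scaleR[of T "-1" x] by simp

lemma clinear_diff: "clinear_op T \<Longrightarrow> T (x - y) = T x - T y"
  using clinear_add[of T x "-y"] clinear_minus[of T y] by simp

lemma clinear_sum: "clinear_op T \<Longrightarrow> T (sum f A) = (\<Sum>i\<in>A. T (f i))"
  by (induction A rule: infinite_finite_induct) (auto simp: clinear_zero clinear_add)

lemma clinear_funpow: "clinear_op T \<Longrightarrow> clinear_op (T ^^ n)"
  by (induction n) (auto simp: clinear_op_def)

lemma csubspace_range:
  assumes A: "clinear_op A"
  shows "csubspace (range A)"
  unfolding csubspace_def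
proof (intro conjI ballI allI)
  show "0 \<in> range A" using clinear_zero[OF A] by (metis rangeI)
next
  fix x y assume "x \<in> range A" "y \<in> range A"
  then obtain a b where "x = A a" "y = A b" by auto
  thus "x + y \<in> range A" using clinear_add[OF A, of a b] by (metis rangeI)
next
  fix c x assume "x \<in> range A"
  then obtain a where "x = A a" by auto
  thus "cscale c x \<in> range A" using clinear_cscale[OF A, of c a] by (metis rangeI)
qed

lemma bounded_op_clinear: "bounded_op T \<Longrightarrow> clinear_op T"
  by (simp add: bounded_op_def)

lemma bounded_opI: "clinear_op T \<Longrightarrow> (\<And>x. norm (T x) \<le> K * norm x) \<Longrightarrow> bounded_op T"
  by (auto simp: bounded_op_def)

lemma bounded_op_bound: "bounded_op T \<Longrightarrow> \<exists>K>0. \<forall>x. norm (T x) \<le> K * norm x"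
proof -
  assume "bounded_op T"
  then obtain K where K: "\<And>x. norm (T x) \<le> K * norm x" by (auto simp: bounded_op_def)
  have "norm (T x) \<le> max K 1 * norm x" for x
    using K[of x] by (meson max.cobounded1 mult_right_mono norm_ge_zero order.trans)
  thus ?thesis by (intro exI[of _ "max K 1"]) auto
qed

lemma bounded_op_bounded_linear: "bounded_op T \<Longrightarrow> bounded_linear T"
proof -
  assume T: "bounded_op T"
  then obtain K where K: "\<And>x. norm (T x) \<le> K * norm x" by (auto simp: bounded_op_def)
  show ?thesis
    apply (rule bounded_linear_intro[where K=K])
    using bounded_op_clinear[OF T] apply (simp add: clinear_add)
    using bounded_op_clinear[OF T] apply (simp add: clinear_scaleR)
    using K by (simp add: mult.commute)
qed

lemma bounded_op_cscale: "bounded_op T \<Longrightarrow> bounded_op (\<lambda>x. cscale a (T x))"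
proof -
  assume T: "bounded_op T"
  obtain L where L: "\<And>x. norm (T x) \<le> L * norm x" using T by (auto simp: bounded_op_def)
  show ?thesis
  proof (rule bounded_opI[where K="cmod a * L"])
    show "clinear_op (\<lambda>x. cscale a (T x))"
      using T by (auto simp: clinear_op_def bounded_op_def cscale_add_right cscale_cscale mult.commute)
    show "norm (cscale a (T x)) \<le> cmod a * L * norm x" for x
      using L[of x] by (simp add: norm_cscale mult.assoc mult_left_mono)
  qed
qed

lemma riesz_representation:
  fixes f :: "'a::chilbert \<Rightarrow> complex"
  assumes add: "\<And>x y. f (x + y) = f x + f y"
    and scale: "\<And>a x. f (cscale a x) = a * f x"
    and bound: "\<And>x. cmod (f x) \<le> K * norm x"
  shows "\<exists>z. \<forall>x. f x = cinner z x"
proof (cases "\<forall>x. f x = 0")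
  case True thus ?thesis by (intro exI[of _ 0]) simp
next
  case False
  then obtain x0 where x0: "f x0 \<noteq> 0" by auto
  have bl: "bounded_linear f"
  proof (rule bounded_linear_intro[where K=K])
    show "f (r *\<^sub>R x) = r *\<^sub>R f x" for r x
      by (simp only: scaleR_cscale[of r x] scale scaleR_conv_of_real)
  qed (auto simp: add mult.commute bound)
  hence "closed {x. f x = 0}"
    using bounded_linear.continuous_on[OF bl continuous_on_id]
    by (intro closed_Collect_eq) (auto intro: continuous_intros)
  moreover have "csubspace {x. f x = 0}"
    using add[of 0 0] by (auto simp: csubspace_def add scale)
  ultimately interpret N: closed_subspace "{x. f x = 0}" by unfold_locales
  define w where "w = x0 - proj {x. f x = 0} x0"
  have w0: "w \<noteq> 0" using N.proj_in[of x0] x0 by (auto simp: w_def)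
  have "f x = cinner (cscale (cnj (f w) / complex_of_real ((norm w)\<^sup>2)) w) x" for x
  proof -
    have "cscale (f x) w - cscale (f w) x = cscale (f x) w + cscale (- f w) x"
      by (simp add: cscale_minus_left)
    hence "f (cscale (f x) w - cscale (f w) x) = 0" by (simp only: add scale) simp
    hence "cinner (cscale (f x) w - cscale (f w) x) w = 0"
      using N.proj_orthogonal by (simp add: w_def)
    hence "cinner w (cscale (f x) w - cscale (f w) x) = 0" by (metis cinner_commute complex_cnj_zero)
    hence "f x * cinner w w - f w * cinner w x = 0"
      by (simp add: cinner_diff_right cinner_cscale_right)
    hence "f x = f w * cinner w x / complex_of_real ((norm w)\<^sup>2)"
      using w0 by (simp add: cinner_self field_simps)
    thus ?thesis by (simp add: cinner_cscale_left)
  qed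
  thus ?thesis by blast
qed

lemma cinner_apply_adj: "bounded_op T \<Longrightarrow> cinner (T x) y = cinner x (adj T y)"
proof -
  assume T: "bounded_op T"
  obtain K where K: "K > 0" "\<And>x. norm (T x) \<le> K * norm x" using bounded_op_bound[OF T] by auto
  have "\<exists>z. \<forall>x. cinner y (T x) = cinner z x" for y
  proof (rule riesz_representation[where K="norm y * K"])
    show "cinner y (T (x1 + x2)) = cinner y (T x1) + cinner y (T x2)" for x1 x2
      using T by (simp add: bounded_op_clinear clinear_add cinner_add_right)
    show "cinner y (T (cscale a x)) = a * cinner y (T x)" for a x
      using T by (simp add: bounded_op_clinear clinear_cscale cinner_cscale_right)
    show "cmod (cinner y (T x)) \<le> norm y * K * norm x" for x
      using cinner_cauchy_schwarz[of y "T x"] K(2)[of x]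
      by (metis mult.assoc mult_left_mono norm_ge_zero order_trans)
  qed
  then obtain S where S: "\<And>y x. cinner y (T x) = cinner (S y) x" by metis
  have "cinner (T x) y = cinner x (S y)" for x y by (metis S cinner_commute)
  hence "\<exists>S. \<forall>x y. cinner (T x) y = cinner x (S y)" by blast
  hence "\<forall>x y. cinner (T x) y = cinner x (adj T y)" unfolding adj_def by (rule someI_ex)
  thus ?thesis by blast
qed

lemma cinner_adj_apply: "bounded_op T \<Longrightarrow> cinner (adj T y) x = cinner y (T x)"
  by (metis cinner_apply_adj cinner_commute)

lemma adj_clinear:
  assumes T: "bounded_op T"
  shows "clinear_op (adj T)"
  unfolding clinear_op_def
proof (intro conjI allI)
  show "adj T (x + y) = adj T x + adj T y" for x y
    by (rule cinner_right_ext) (simp add: cinner_apply_adj[OF T, symmetric] cinner_add_right)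
  show "adj T (cscale a x) = cscale a (adj T x)" for a x
    by (rule cinner_right_ext) (simp add: cinner_apply_adj[OF T, symmetric] cinner_cscale_right)
qed

lemma A_op_Suc:
  fixes T :: "'a::chilbert \<Rightarrow> 'a"
  assumes T: "bounded_op T"
  shows "A_op (Suc n) T x = A_op n T x - adj T (A_op n T (T x))"
proof -
  define X where "X k = (adj T ^^ k) ((T ^^ k) x)" for k
  define cf where "cf m k = ((-1) ^ k * of_nat (m choose k) :: complex)" for m k
  define B where "B m y = (\<Sum>k\<le>m. cscale (cf m k) ((adj T ^^ k) ((T ^^ k) y)))" for m y
  have AB: "A_op m T y = - B m y" for m y by (simp add: A_op_def B_def cf_def)
  have Bx: "B m x = (\<Sum>k\<le>m. cscale (cf m k) (X k))" for m by (simp add: B_def X_def)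
  have lin: "clinear_op (adj T)" using adj_clinear[OF T] .
  have XS: "adj T ((adj T ^^ k) ((T ^^ k) (T x))) = X (Suc k)" for k
    by (simp only: X_def funpow.simps(2)[of k "adj T"] funpow_Suc_right[of k T] comp_apply)
  have adjB: "adj T (B n (T x)) = (\<Sum>k\<le>n. cscale (cf n k) (X (Suc k)))"
    unfolding B_def by (simp add: clinear_sum[OF lin] clinear_cscale[OF lin] XS)
  have cf_Suc: "cf (Suc n) (Suc k) = cf n (Suc k) - cf n k" for k
    by (simp add: cf_def algebra_simps)
  have shift: "B m x = cscale (cf m 0) (X 0) + (\<Sum>k\<le>m. cscale (cf m (Suc k)) (X (Suc k)))" for m
  proof -
    have "B m x = (\<Sum>k\<le>Suc m. cscale (cf m k) (X k))" unfolding Bx by (simp add: cf_def binomial_eq_0)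
    thus ?thesis by (simp add: sum.atMost_Suc_shift del: sum.atMost_Suc)
  qed
  have "B (Suc n) x = cscale (cf (Suc n) 0) (X 0)
      + ((\<Sum>k\<le>n. cscale (cf n (Suc k)) (X (Suc k))) - (\<Sum>k\<le>n. cscale (cf n k) (X (Suc k))))"
    unfolding Bx by (simp add: sum.atMost_Suc_shift cf_Suc cscale_diff_left sum_subtractf
        del: sum.atMost_Suc)
  also have "(\<Sum>k\<le>n. cscale (cf n (Suc k)) (X (Suc k))) = B n x - cscale (cf n 0) (X 0)"
    using shift[of n] by simp
  finally have "B (Suc n) x = B n x - adj T (B n (T x))"
    by (simp add: cf_def adjB)
  thus ?thesis by (simp add: AB clinear_minus[OF lin])
qed

section \<open>Positive operators\<close>

lemma positive_clinear: "positive_op A \<Longrightarrow> clinear_op A"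
  by (simp add: positive_op_def bounded_op_def)

lemma positive_Im: "positive_op A \<Longrightarrow> Im (cinner x (A x)) = 0"
  by (simp add: positive_op_def)

lemma positive_Re: "positive_op A \<Longrightarrow> 0 \<le> Re (cinner x (A x))"
  by (simp add: positive_op_def)

lemma positive_cinner_real: "positive_op A \<Longrightarrow> cinner x (A x) = complex_of_real (Re (cinner x (A x)))"
  by (simp add: positive_Im complex_eq_iff)

text \<open>Over the complex field a real quadratic form determines the sesquilinear form
  (polarisation), so positivity alone gives self-adjointness.\<close>

lemma positive_selfadjoint:
  assumes A: "positive_op A"
  shows "cinner (A x) y = cinner x (A y)"
proof -
  note L = positive_clinear[OF A]
  define a where "a = cinner x (A y)"
  define b where "b = cinner y (A x)"
  have "Im (cinner (x + y) (A (x + y))) = 0" using A by (rule positive_Im)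
  hence "Im (cinner x (A x) + cinner y (A y) + a + b) = 0"
    by (simp add: clinear_add[OF L] cinner_add_left cinner_add_right a_def b_def algebra_simps)
  hence 1: "Im a + Im b = 0" using positive_Im[OF A, of x] positive_Im[OF A, of y] by simp
  have "Im (cinner (cscale \<i> x + y) (A (cscale \<i> x + y))) = 0" using A by (rule positive_Im)
  hence "Im (cinner x (A x) + cinner y (A y) + (- \<i>) * a + \<i> * b) = 0"
    by (simp add: clinear_add[OF L] clinear_cscale[OF L] cinner_add_left cinner_add_right
        cinner_cscale_left cinner_cscale_right a_def b_def algebra_simps)
  hence 2: "Re b - Re a = 0" using positive_Im[OF A, of x] positive_Im[OF A, of y] by simp
  have "b = cnj a" using 1 2 by (simp add: complex_eq_iff)
  hence "cinner y (A x) = cnj (cinner x (A y))" by (simp add: a_def b_def)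
  thus ?thesis by (metis cinner_commute complex_cnj_cnj)
qed

lemma positive_Re_cauchy_schwarz:
  assumes A: "positive_op A"
  shows "(Re (cinner x (A y)))\<^sup>2 \<le> Re (cinner x (A x)) * Re (cinner y (A y))"
proof -
  note L = positive_clinear[OF A]
  define p where "p = Re (cinner x (A x))"
  define q where "q = Re (cinner y (A y))"
  define r where "r = Re (cinner x (A y))"
  have sym: "Re (cinner y (A x)) = r"
  proof -
    have "cinner y (A x) = cnj (cinner (A x) y)" by (rule cinner_commute)
    also have "\<dots> = cnj (cinner x (A y))" by (simp add: positive_selfadjoint[OF A])
    finally show ?thesis by (simp add: r_def)
  qed
  have quad: "0 \<le> p + 2 * t * r + t\<^sup>2 * q" for t :: real
  proof -
    have "0 \<le> Re (cinner (x + t *\<^sub>R y) (A (x + t *\<^sub>R y)))" by (rule positive_Re[OF A])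
    also have "\<dots> = p + 2 * t * r + t\<^sup>2 * q"
      using sym by (simp add: clinear_add[OF L] clinear_scaleR[OF L] cinner_add_left cinner_add_right
          cinner_scaleR_left cinner_scaleR_right p_def q_def r_def power2_eq_square algebra_simps)
    finally show ?thesis .
  qed
  show ?thesis
  proof (cases "q = 0")
    case True
    have "r = 0"
    proof (rule ccontr)
      assume "r \<noteq> 0"
      have "0 \<le> p + 2 * (- (p + 1) / (2 * r)) * r" using quad[of "- (p + 1) / (2 * r)"] True by simp
      also have "\<dots> = -1" using \<open>r \<noteq> 0\<close> by (simp add: field_simps)
      finally show False by simp
    qed
    thus ?thesis using True by (simp add: p_def q_def r_def)
  next
    case False
    have q0: "0 < q" using False positive_Re[OF A, of y] q_def by auto
    have "0 \<le> p + 2 * (- r / q) * r + (- r / q)\<^sup>2 * q" by (rule quad)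
    also have "\<dots> = p - r\<^sup>2 / q" using q0 by (simp add: field_simps power2_eq_square)
    finally have "r\<^sup>2 \<le> p * q" using q0 by (simp add: field_simps)
    thus ?thesis by (simp add: p_def q_def r_def)
  qed
qed

lemma positive_form_eq_zero:
  assumes A: "positive_op A" and zero: "Re (cinner x (A x)) = 0"
  shows "A x = 0"
proof -
  have "(Re (cinner x (A (A x))))\<^sup>2 \<le> 0"
    using positive_Re_cauchy_schwarz[OF A, of x "A x"] zero by simp
  moreover have "cinner x (A (A x)) = cinner (A x) (A x)" by (simp add: positive_selfadjoint[OF A])
  ultimately have "(norm (A x))\<^sup>2 = 0" by (simp add: Re_cinner_self)
  thus ?thesis by simp
qed

section \<open>Square roots of positive operators\<close>

text \<open>Coefficients of the binomial series of \<open>(1 - t)\<^sup>1\<^sup>/\<^sup>2\<close>.\<close>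

definition sqrt_coeff :: "nat \<Rightarrow> real" where
  "sqrt_coeff k = (-1) ^ k * ((1/2::real) gchoose k)"

lemma sqrt_coeff_0 [simp]: "sqrt_coeff 0 = 1"
  by (simp add: sqrt_coeff_def)

lemma sqrt_coeff_Suc: "sqrt_coeff (Suc k) = - (1/2) * pochhammer (1/2) k / fact (Suc k)"
proof -
  have "sqrt_coeff k = pochhammer (-1/2) k / fact k" for k
    by (simp add: sqrt_coeff_def gbinomial_pochhammer power_mult_distrib[symmetric]
        flip: power_add mult.assoc)
  thus ?thesis by (simp add: pochhammer_rec)
qed

lemma sqrt_coeff_Suc_nonpos: "sqrt_coeff (Suc k) \<le> 0"
  using pochhammer_nonneg[of "1/2::real" k] by (simp add: sqrt_coeff_Suc divide_nonneg_pos)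

lemma sum_sqrt_coeff: "(\<Sum>k\<le>N. sqrt_coeff k) = pochhammer (1/2) N / fact N"
proof (induction N)
  case (Suc N)
  define H where "H = pochhammer (1/2::real) N / fact N"
  have "(\<Sum>k\<le>Suc N. sqrt_coeff k) = H - (1/2) * H / (real N + 1)"
    using Suc by (simp add: sqrt_coeff_Suc H_def divide_divide_eq_left algebra_simps)
  also have "\<dots> = H * (real N + 1/2) / (real N + 1)"
    by (simp add: field_simps)
  also have "\<dots> = pochhammer (1/2) (Suc N) / fact (Suc N)"
    by (simp add: H_def pochhammer_rec' divide_divide_eq_left algebra_simps)
  finally show ?case .
qed simp

lemma sum_sqrt_coeff_Suc: "(\<Sum>k<N. \<bar>sqrt_coeff (Suc k)\<bar>) = 1 - (\<Sum>k\<le>N. sqrt_coeff k)"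
proof -
  have "(\<Sum>k<N. \<bar>sqrt_coeff (Suc k)\<bar>) = - (\<Sum>k<N. sqrt_coeff (Suc k))"
    by (simp add: abs_of_nonpos sqrt_coeff_Suc_nonpos sum_negf)
  also have "(\<Sum>k<N. sqrt_coeff (Suc k)) = (\<Sum>k\<le>N. sqrt_coeff k) - 1"
    by (simp add: sum.atMost_shift)
  finally show ?thesis by simp
qed

lemma sum_abs_sqrt_coeff_Suc_le: "(\<Sum>k<N. \<bar>sqrt_coeff (Suc k)\<bar>) \<le> 1"
  unfolding sum_sqrt_coeff_Suc sum_sqrt_coeff
  by (simp add: pochhammer_nonneg)

lemma sum_abs_sqrt_coeff_le: "(\<Sum>k<N. \<bar>sqrt_coeff k\<bar>) \<le> 2"
proof (cases N)
  case (Suc M)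
  have "(\<Sum>k<N. \<bar>sqrt_coeff k\<bar>) = 1 + (\<Sum>k<M. \<bar>sqrt_coeff (Suc k)\<bar>)"
    unfolding Suc sum.lessThan_Suc_shift by simp
  thus ?thesis using sum_abs_sqrt_coeff_Suc_le[of M] by simp
qed simp

lemma summable_abs_sqrt_coeff: "summable (\<lambda>k. \<bar>sqrt_coeff k\<bar>)"
  by (rule summableI_nonneg_bounded[OF abs_ge_zero sum_abs_sqrt_coeff_le])

lemma suminf_abs_sqrt_coeff_Suc_le: "(\<Sum>k. \<bar>sqrt_coeff (Suc k)\<bar>) \<le> 1"
  using summable_abs_sqrt_coeff summable_Suc_iff[of "\<lambda>k. \<bar>sqrt_coeff k\<bar>"]
  by (intro suminf_le_const sum_abs_sqrt_coeff_Suc_le) simp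

text \<open>The series squares to \<open>1 - t\<close>, by Vandermonde's identity.\<close>

lemma sqrt_coeff_convolution:
  "(\<Sum>i\<le>k. sqrt_coeff i * sqrt_coeff (k - i)) = (if k = 0 then 1 else if k = 1 then -1 else 0)"
proof -
  have "(\<Sum>i\<le>k. sqrt_coeff i * sqrt_coeff (k - i))
      = (-1) ^ k * (\<Sum>i\<le>k. ((1/2::real) gchoose i) * ((1/2) gchoose (k - i)))"
    unfolding sum_distrib_left
    by (intro sum.cong refl) (simp add: sqrt_coeff_def mult_ac flip: power_add)
  also have "(\<Sum>i\<le>k. ((1/2::real) gchoose i) * ((1/2) gchoose (k - i))) = of_nat (1 choose k)"
    using gbinomial_Vandermonde[of "1/2::real" "1/2" k] binomial_gbinomial[of 1 k, where 'a=real]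
    by (simp add: atLeast0AtMost)
  also have "(-1) ^ k * of_nat (1 choose k) = (if k = 0 then 1 else if k = 1 then -1 else (0::real))"
    by (cases k) (auto simp: binomial_eq_0)
  finally show ?thesis .
qed

lemma suminf_head_dominates_nonneg:
  fixes c q :: "nat \<Rightarrow> real"
  assumes c: "summable (\<lambda>n. \<bar>c n\<bar>)" "(\<Sum>n. \<bar>c (Suc n)\<bar>) \<le> c 0"
    and q: "\<And>n. \<bar>q n\<bar> \<le> q 0"
  shows "0 \<le> (\<Sum>n. c n * q n)"
proof -
  have q0: "0 \<le> q 0" using q[of 0] by simp
  have bound: "\<bar>c n * q n\<bar> \<le> \<bar>c n\<bar> * q 0" for n
    unfolding abs_mult using q[of n] by (rule mult_left_mono) simp
  have cS1: "summable (\<lambda>n. \<bar>c (Suc n)\<bar>)"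
    using c(1) summable_Suc_iff[of "\<lambda>n. \<bar>c n\<bar>"] by simp
  hence cS: "summable (\<lambda>n. \<bar>c (Suc n)\<bar> * q 0)" by (rule summable_mult2)
  have cq: "summable (\<lambda>n. c n * q n)"
    by (rule summable_comparison_test'[where N=0, OF summable_mult2[OF c(1)]])
       (use bound in \<open>simp only: real_norm_def\<close>)
  have cqS: "summable (\<lambda>n. c (Suc n) * q (Suc n))"
    using cq summable_Suc_iff[of "\<lambda>n. c n * q n"] by simp
  have "(\<Sum>n. - (\<bar>c (Suc n)\<bar> * q 0)) \<le> (\<Sum>n. c (Suc n) * q (Suc n))"
    using summable_minus[OF cS] cqS
  proof (rule suminf_le[rotated])
    show "- (\<bar>c (Suc n)\<bar> * q 0) \<le> c (Suc n) * q (Suc n)" for n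
      using bound[of "Suc n"] by linarith
  qed
  moreover have "(\<Sum>n. - (\<bar>c (Suc n)\<bar> * q 0)) = - ((\<Sum>n. \<bar>c (Suc n)\<bar>) * q 0)"
    using suminf_minus[OF cS] suminf_mult2[OF cS1] by simp
  moreover have "(\<Sum>n. \<bar>c (Suc n)\<bar>) * q 0 \<le> c 0 * q 0"
    using c(2) q0 by (rule mult_right_mono)
  moreover have "(\<Sum>n. c n * q n) = (\<Sum>n. c (Suc n) * q (Suc n)) + c 0 * q 0"
    using suminf_split_head[OF cq] by simp
  ultimately show ?thesis by linarith
qed

lemma Cauchy_product_defect_tendsto_zero:
  fixes c :: "nat \<Rightarrow> real" and v :: "nat \<Rightarrow> 'a::real_normed_vector"
  assumes c: "summable (\<lambda>k. \<bar>c k\<bar>)" and v: "\<And>k. norm (v k) \<le> C"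
  shows "(\<lambda>N. \<Sum>p\<in>{..<N} \<times> {..<N} - {(i, j). i + j < N}.
            (c (fst p) * c (snd p)) *\<^sub>R v (fst p + snd p)) \<longlonglongrightarrow> 0"
proof (rule Lim_null_comparison)
  define w where "w p = \<bar>c (fst p)\<bar> * \<bar>c (snd p)\<bar>" for p
  define G where "G = (\<Sum>k. \<bar>c k\<bar>)"
  have sub: "{(i, j). i + j < N} \<subseteq> {..<N} \<times> {..<N}" for N :: nat by auto
  have square: "(\<Sum>p\<in>{..<N} \<times> {..<N}. w p) = (\<Sum>i<N. \<bar>c i\<bar>) * (\<Sum>j<N. \<bar>c j\<bar>)" for N
    by (simp add: w_def sum_product sum.cartesian_product case_prod_beta')
  have triangle: "(\<Sum>p\<in>{(i, j). i + j < N}. w p) = (\<Sum>k<N. \<Sum>i\<le>k. \<bar>c i\<bar> * \<bar>c (k - i)\<bar>)" for N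
    unfolding w_def by (subst sum.triangle_reindex[symmetric]) (auto intro: sum.cong)
  have "(\<lambda>N. (\<Sum>i<N. \<bar>c i\<bar>) * (\<Sum>j<N. \<bar>c j\<bar>)) \<longlonglongrightarrow> G * G"
    unfolding G_def by (intro tendsto_mult summable_LIMSEQ c)
  moreover have "(\<lambda>N. \<Sum>k<N. \<Sum>i\<le>k. \<bar>c i\<bar> * \<bar>c (k - i)\<bar>) \<longlonglongrightarrow> G * G"
    using Cauchy_product_sums[of "\<lambda>k. \<bar>c k\<bar>" "\<lambda>k. \<bar>c k\<bar>"] c by (simp add: G_def sums_def)
  ultimately have "(\<lambda>N. (\<Sum>i<N. \<bar>c i\<bar>) * (\<Sum>j<N. \<bar>c j\<bar>)
      - (\<Sum>k<N. \<Sum>i\<le>k. \<bar>c i\<bar> * \<bar>c (k - i)\<bar>)) \<longlonglongrightarrow> G * G - G * G"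
    by (rule tendsto_diff)
  hence "(\<lambda>N. (\<Sum>p\<in>{..<N} \<times> {..<N} - {(i, j). i + j < N}. w p)) \<longlonglongrightarrow> 0"
    by (simp add: sum_diff[OF _ sub] square triangle)
  thus "(\<lambda>N. (\<Sum>p\<in>{..<N} \<times> {..<N} - {(i, j). i + j < N}. w p) * C) \<longlonglongrightarrow> 0"
    using tendsto_mult_left_zero by fastforce
  have "norm (\<Sum>p\<in>A. (c (fst p) * c (snd p)) *\<^sub>R v (fst p + snd p)) \<le> (\<Sum>p\<in>A. w p) * C"
    for A :: "(nat \<times> nat) set"
  proof -
    have "norm (\<Sum>p\<in>A. (c (fst p) * c (snd p)) *\<^sub>R v (fst p + snd p))
        \<le> (\<Sum>p\<in>A. norm ((c (fst p) * c (snd p)) *\<^sub>R v (fst p + snd p)))" by (rule norm_sum)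
    also have "\<dots> \<le> (\<Sum>p\<in>A. w p * C)"
      by (intro sum_mono) (simp add: w_def abs_mult mult_left_mono v)
    finally show ?thesis by (simp add: sum_distrib_right)
  qed
  thus "\<forall>\<^sub>F N in sequentially. norm (\<Sum>p\<in>{..<N} \<times> {..<N} - {(i, j). i + j < N}.
      (c (fst p) * c (snd p)) *\<^sub>R v (fst p + snd p))
      \<le> (\<Sum>p\<in>{..<N} \<times> {..<N} - {(i, j). i + j < N}. w p) * C"
    by simp
qed

text \<open>For \<open>0 \<le> A \<le> K\<close> put \<open>B = I - A/K\<close>, so \<open>0 \<le> B \<le> I\<close>; then
  \<open>\<surd>K (I - B)\<^sup>1\<^sup>/\<^sup>2 = \<surd>K (\<Sum>n. sqrt_coeff n B\<^sup>n)\<close> is a positive square root of \<open>A\<close>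
  commuting with everything that commutes with \<open>A\<close>.\<close>

locale sqrt_construction =
  fixes A :: "'a::chilbert \<Rightarrow> 'a"
  assumes positive: "positive_op A"
begin

definition K :: real where "K = (SOME K. K > 0 \<and> (\<forall>x. norm (A x) \<le> K * norm x))"

lemma K_pos: "K > 0" and norm_A_le: "norm (A x) \<le> K * norm x"
proof -
  have "\<exists>K. K > 0 \<and> (\<forall>x. norm (A x) \<le> K * norm x)"
    using bounded_op_bound[of A] positive by (simp add: positive_op_def)
  hence "K > 0 \<and> (\<forall>x. norm (A x) \<le> K * norm x)" unfolding K_def by (rule someI_ex)
  thus "K > 0" "norm (A x) \<le> K * norm x" by auto
qed

definition B :: "'a \<Rightarrow> 'a" where "B x = x - (1 / K) *\<^sub>R A x"

lemma B_clinear: "clinear_op B"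
  unfolding clinear_op_def B_def
  by (auto simp: clinear_add[OF positive_clinear[OF positive]] clinear_cscale[OF positive_clinear[OF positive]]
      cscale_diff_right cscale_scaleR_commute algebra_simps)

lemma cinner_B: "cinner x (B x) = complex_of_real ((norm x)\<^sup>2 - Re (cinner x (A x)) / K)"
proof -
  have "cinner x (B x) = cinner x x - complex_of_real (1 / K) * cinner x (A x)"
    by (simp add: B_def cinner_diff_right cinner_scaleR_right)
  also have "cinner x (A x) = complex_of_real (Re (cinner x (A x)))"
    by (rule positive_cinner_real[OF positive])
  finally show ?thesis by (simp add: cinner_self)
qed

lemma Re_cinner_B_le: "Re (cinner x (B x)) \<le> (norm x)\<^sup>2"
  using positive_Re[OF positive, of x] K_pos by (simp add: cinner_B)

lemma B_positive: "positive_op B"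
  unfolding positive_op_def
proof (intro conjI allI)
  show "bounded_op B"
  proof (rule bounded_opI[OF B_clinear, where K=2])
    fix x
    have "norm (B x) \<le> norm x + norm ((1 / K) *\<^sub>R A x)" unfolding B_def by (rule norm_triangle_ineq4)
    also have "norm ((1 / K) *\<^sub>R A x) \<le> norm x"
      using norm_A_le[of x] K_pos by (simp add: field_simps)
    finally show "norm (B x) \<le> 2 * norm x" by simp
  qed
  fix x
  show "Im (cinner x (B x)) = 0" by (simp add: cinner_B)
  have "Re (cinner x (A x)) \<le> cmod (cinner x (A x))" by (rule complex_Re_le_cmod)
  also have "\<dots> \<le> norm x * norm (A x)" by (rule cinner_cauchy_schwarz)
  also have "\<dots> \<le> norm x * (K * norm x)" by (intro mult_left_mono norm_A_le) simp
  finally have "Re (cinner x (A x)) / K \<le> (norm x)\<^sup>2"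
    using K_pos by (simp add: field_simps power2_eq_square)
  thus "0 \<le> Re (cinner x (B x))" by (simp add: cinner_B)
qed

lemma norm_B_le: "norm (B x) \<le> norm x"
proof -
  have "(Re (cinner x (B (B x))))\<^sup>2 \<le> Re (cinner x (B x)) * Re (cinner (B x) (B (B x)))"
    by (rule positive_Re_cauchy_schwarz[OF B_positive])
  moreover have "cinner x (B (B x)) = cinner (B x) (B x)"
    by (simp add: positive_selfadjoint[OF B_positive])
  ultimately have "((norm (B x))\<^sup>2)\<^sup>2 \<le> Re (cinner x (B x)) * Re (cinner (B x) (B (B x)))"
    by (simp add: Re_cinner_self)
  also have "\<dots> \<le> (norm x)\<^sup>2 * (norm (B x))\<^sup>2"
    using Re_cinner_B_le positive_Re[OF B_positive] by (intro mult_mono) auto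
  finally have "(norm (B x))\<^sup>2 * (norm (B x))\<^sup>2 \<le> (norm x)\<^sup>2 * (norm (B x))\<^sup>2"
    by (simp only: power2_eq_square[of "(norm (B x))\<^sup>2"])
  moreover have "0 < (norm (B x))\<^sup>2" if "B x \<noteq> 0" using that by simp
  ultimately have "(norm (B x))\<^sup>2 \<le> (norm x)\<^sup>2"
    by (cases "B x = 0") (simp, metis mult_right_le_imp_le)
  thus ?thesis using power2_le_imp_le by fastforce
qed

lemma norm_B_pow_le: "norm ((B ^^ n) x) \<le> norm x"
  by (induction n) (auto intro: order_trans[OF norm_B_le])

lemma B_pow_selfadjoint: "cinner ((B ^^ n) x) y = cinner x ((B ^^ n) y)"
proof (induction n arbitrary: x y)
  case (Suc n)
  have "cinner ((B ^^ Suc n) x) y = cinner ((B ^^ n) x) (B y)"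
    by (simp add: positive_selfadjoint[OF B_positive])
  also have "\<dots> = cinner x ((B ^^ n) (B y))" by (rule Suc)
  finally show ?case by (simp add: funpow_Suc_right del: funpow.simps)
qed simp

lemma abs_Re_cinner_B_pow_le: "\<bar>Re (cinner x ((B ^^ n) x))\<bar> \<le> (norm x)\<^sup>2"
proof -
  have "\<bar>Re (cinner x ((B ^^ n) x))\<bar> \<le> norm x * norm ((B ^^ n) x)"
    using abs_Re_le_cmod cinner_cauchy_schwarz by (rule order_trans)
  also have "\<dots> \<le> norm x * norm x" by (intro mult_left_mono norm_B_pow_le) auto
  finally show ?thesis by (simp add: power2_eq_square)
qed

definition sqrt_term :: "'a \<Rightarrow> nat \<Rightarrow> 'a" where
  "sqrt_term x n = sqrt_coeff n *\<^sub>R (B ^^ n) x"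

definition sqrt_partial :: "nat \<Rightarrow> 'a \<Rightarrow> 'a" where
  "sqrt_partial N x = (\<Sum>n<N. sqrt_term x n)"

definition sqrt_series :: "'a \<Rightarrow> 'a" where
  "sqrt_series x = (\<Sum>n. sqrt_term x n)"

lemma norm_sqrt_term_le: "norm (sqrt_term x n) \<le> \<bar>sqrt_coeff n\<bar> * norm x"
  unfolding sqrt_term_def by (simp add: mult_left_mono norm_B_pow_le)

lemma summable_sqrt_term: "summable (sqrt_term x)"
  by (rule summable_comparison_test'[where N=0, OF summable_mult2[OF summable_abs_sqrt_coeff]])
     (rule norm_sqrt_term_le)

lemma sqrt_partial_tendsto: "(\<lambda>N. sqrt_partial N x) \<longlonglongrightarrow> sqrt_series x"
  unfolding sqrt_partial_def sqrt_series_def by (rule summable_LIMSEQ[OF summable_sqrt_term])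

lemma norm_sqrt_partial_le: "norm (sqrt_partial N x) \<le> 2 * norm x"
proof -
  have "norm (sqrt_partial N x) \<le> (\<Sum>n<N. norm (sqrt_term x n))"
    unfolding sqrt_partial_def by (rule norm_sum)
  also have "\<dots> \<le> (\<Sum>n<N. \<bar>sqrt_coeff n\<bar> * norm x)" by (intro sum_mono norm_sqrt_term_le)
  also have "\<dots> \<le> 2 * norm x"
    unfolding sum_distrib_right[symmetric] by (intro mult_right_mono sum_abs_sqrt_coeff_le) auto
  finally show ?thesis .
qed

lemma norm_sqrt_series_le: "norm (sqrt_series x) \<le> 2 * norm x"
  using tendsto_norm[OF sqrt_partial_tendsto[of x]] norm_sqrt_partial_le
  by (intro LIMSEQ_le_const2) auto

lemma sqrt_partial_clinear: "clinear_op (sqrt_partial N)"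
  using clinear_funpow[OF B_clinear]
  by (simp add: clinear_op_def sqrt_partial_def sqrt_term_def sum.distrib cscale_sum_right
      scaleR_add_right cscale_scaleR_commute)

lemma sqrt_series_clinear: "clinear_op sqrt_series"
  unfolding clinear_op_def
proof (intro conjI allI)
  fix x y a
  have "(\<lambda>N. sqrt_partial N (x + y)) \<longlonglongrightarrow> sqrt_series x + sqrt_series y"
    unfolding clinear_add[OF sqrt_partial_clinear] by (intro tendsto_add sqrt_partial_tendsto)
  thus "sqrt_series (x + y) = sqrt_series x + sqrt_series y"
    by (rule LIMSEQ_unique[OF sqrt_partial_tendsto])
  have "(\<lambda>N. sqrt_partial N (cscale a x)) \<longlonglongrightarrow> cscale a (sqrt_series x)"
    unfolding clinear_cscale[OF sqrt_partial_clinear]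
    by (rule bounded_linear.tendsto[OF bounded_linear_cscale sqrt_partial_tendsto])
  thus "sqrt_series (cscale a x) = cscale a (sqrt_series x)"
    by (rule LIMSEQ_unique[OF sqrt_partial_tendsto])
qed

lemma sqrt_series_positive: "positive_op sqrt_series"
  unfolding positive_op_def
proof (intro conjI allI)
  show "bounded_op sqrt_series" by (rule bounded_opI[OF sqrt_series_clinear norm_sqrt_series_le])
  fix x
  define q where "q n = Re (cinner x ((B ^^ n) x))" for n
  have real: "cinner x ((B ^^ n) x) = complex_of_real (q n)" for n
  proof -
    have "cinner x ((B ^^ n) x) = cnj (cinner x ((B ^^ n) x))"
      by (metis B_pow_selfadjoint cinner_commute)
    hence "Im (cinner x ((B ^^ n) x)) = 0" by (metis add.inverse_inverse cnj.sel(2) neg_equal_zero)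
    thus ?thesis by (simp add: q_def complex_eq_iff)
  qed
  have "(\<lambda>n. cinner x (sqrt_term x n)) sums cinner x (sqrt_series x)"
    unfolding sqrt_series_def
    by (rule bounded_linear.sums[OF bounded_linear_cinner_right summable_sums[OF summable_sqrt_term]])
  moreover have "cinner x (sqrt_term x n) = complex_of_real (sqrt_coeff n * q n)" for n
    by (simp add: sqrt_term_def cinner_scaleR_right real)
  ultimately have sums: "(\<lambda>n. complex_of_real (sqrt_coeff n * q n)) sums cinner x (sqrt_series x)"
    by simp
  have "(\<lambda>n. 0) sums Im (cinner x (sqrt_series x))" using sums_Im[OF sums] by simp
  thus "Im (cinner x (sqrt_series x)) = 0" using sums_unique2[OF sums_zero] by simp
  have "0 \<le> (\<Sum>n. sqrt_coeff n * q n)"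
    using summable_abs_sqrt_coeff suminf_abs_sqrt_coeff_Suc_le abs_Re_cinner_B_pow_le
    by (intro suminf_head_dominates_nonneg) (auto simp: q_def Re_cinner_self)
  moreover have "(\<lambda>n. sqrt_coeff n * q n) sums Re (cinner x (sqrt_series x))"
    using sums_Re[OF sums] by simp
  ultimately show "0 \<le> Re (cinner x (sqrt_series x))" using sums_unique by metis
qed

lemma sqrt_partial_sqrt_partial_tendsto:
  "(\<lambda>N. sqrt_partial N (sqrt_partial N x)) \<longlonglongrightarrow> sqrt_series (sqrt_series x)"
proof -
  have "(\<lambda>N. sqrt_partial N (sqrt_partial N x - sqrt_series x)) \<longlonglongrightarrow> 0"
  proof (rule Lim_null_comparison)
    show "\<forall>\<^sub>F N in sequentially. norm (sqrt_partial N (sqrt_partial N x - sqrt_series x))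
        \<le> 2 * norm (sqrt_partial N x - sqrt_series x)"
      by (intro always_eventually allI norm_sqrt_partial_le)
    show "(\<lambda>N. 2 * norm (sqrt_partial N x - sqrt_series x)) \<longlonglongrightarrow> 0"
      using sqrt_partial_tendsto[of x]
      by (intro tendsto_mult_right_zero tendsto_norm_zero) (simp add: LIM_zero)
  qed
  hence "(\<lambda>N. sqrt_partial N (sqrt_partial N x - sqrt_series x) + sqrt_partial N (sqrt_series x))
      \<longlonglongrightarrow> 0 + sqrt_series (sqrt_series x)"
    by (intro tendsto_add sqrt_partial_tendsto)
  thus ?thesis by (simp add: clinear_diff[OF sqrt_partial_clinear])
qed

lemma sqrt_series_squared: "sqrt_series (sqrt_series x) = x - B x"
proof -
  define square where "square N = {..<N} \<times> {..<N}" for N :: nat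
  define triangle where "triangle N = {(i, j). i + j < N}" for N :: nat
  define product_term where "product_term p = (sqrt_coeff (fst p) * sqrt_coeff (snd p)) *\<^sub>R (B ^^ (fst p + snd p)) x"
    for p
  have sub: "triangle N \<subseteq> square N" for N by (auto simp: triangle_def square_def)
  have product: "sqrt_partial N (sqrt_partial N x) = sum product_term (square N)" for N
    using clinear_funpow[OF B_clinear]
    by (simp add: sqrt_partial_def sqrt_term_def clinear_sum clinear_scaleR scaleR_right.sum
        funpow_add sum.cartesian_product case_prod_beta' product_term_def square_def)
  have triangle_sum: "sum product_term (triangle N) = x - B x" if "2 \<le> N" for N
  proof -
    obtain M where M: "N = Suc (Suc M)" using \<open>2 \<le> N\<close> by (metis add_2_eq_Suc le_Suc_ex)
    have "sum product_term (triangle N) = (\<Sum>k<N. (\<Sum>i\<le>k. sqrt_coeff i * sqrt_coeff (k - i)) *\<^sub>R (B ^^ k) x)"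
    proof -
      have "sum product_term (triangle N)
          = (\<Sum>(i, j)\<in>triangle N. (sqrt_coeff i * sqrt_coeff j) *\<^sub>R (B ^^ (i + j)) x)"
        by (rule sum.cong) (auto simp: product_term_def)
      also have "\<dots> = (\<Sum>k<N. \<Sum>i\<le>k. (sqrt_coeff i * sqrt_coeff (k - i)) *\<^sub>R (B ^^ (i + (k - i))) x)"
        unfolding triangle_def by (rule sum.triangle_reindex)
      finally show ?thesis by (simp add: scaleR_left.sum)
    qed
    also have "\<dots> = x - B x"
      unfolding sqrt_coeff_convolution M by (induction M) auto
    finally show ?thesis .
  qed
  have "(\<lambda>N. sum product_term (square N - triangle N)) \<longlonglongrightarrow> 0"
    unfolding square_def triangle_def product_term_def
    by (rule Cauchy_product_defect_tendsto_zero[OF summable_abs_sqrt_coeff norm_B_pow_le])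
  hence "(\<lambda>N. (x - B x) + sum product_term (square N - triangle N)) \<longlonglongrightarrow> x - B x"
    using tendsto_add[OF tendsto_const] by fastforce
  moreover have "\<forall>\<^sub>F N in sequentially.
      (x - B x) + sum product_term (square N - triangle N) = sqrt_partial N (sqrt_partial N x)"
  proof (rule eventually_sequentiallyI[of 2])
    fix N :: nat assume "2 \<le> N"
    have "sum product_term (square N - triangle N) = sum product_term (square N) - sum product_term (triangle N)"
      by (rule sum_diff[OF _ sub]) (simp add: square_def)
    thus "(x - B x) + sum product_term (square N - triangle N) = sqrt_partial N (sqrt_partial N x)"
      using triangle_sum[OF \<open>2 \<le> N\<close>] by (simp add: product)
  qed
  ultimately have "(\<lambda>N. sqrt_partial N (sqrt_partial N x)) \<longlonglongrightarrow> x - B x"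
    by (rule Lim_transform_eventually)
  thus ?thesis by (rule LIMSEQ_unique[OF sqrt_partial_sqrt_partial_tendsto])
qed

definition A_root :: "'a \<Rightarrow> 'a" where "A_root x = sqrt K *\<^sub>R sqrt_series x"

lemma A_root_squared: "A_root (A_root x) = A x"
  using K_pos by (simp add: A_root_def clinear_scaleR[OF sqrt_series_clinear] sqrt_series_squared B_def)

lemma A_root_positive: "positive_op A_root"
proof -
  have "bounded_op A_root"
    using bounded_op_cscale[of sqrt_series "complex_of_real (sqrt K)"] sqrt_series_positive
    by (simp add: A_root_def[abs_def] scaleR_cscale positive_op_def)
  thus ?thesis
    using sqrt_series_positive K_pos
    by (simp add: positive_op_def A_root_def cinner_scaleR_right)
qed

lemma A_root_commute:
  assumes S: "bounded_op S" and SA: "\<And>x. S (A x) = A (S x)"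
  shows "S (A_root x) = A_root (S x)"
proof -
  note L = bounded_op_clinear[OF S]
  have "S (B x) = B (S x)" for x by (simp add: B_def clinear_diff[OF L] clinear_scaleR[OF L] SA)
  hence "S ((B ^^ n) x) = (B ^^ n) (S x)" for n x by (induction n) simp_all
  hence "S (sqrt_term x n) = sqrt_term (S x) n" for n by (simp add: sqrt_term_def clinear_scaleR[OF L])
  moreover have "S (sqrt_series x) = (\<Sum>n. S (sqrt_term x n))"
    unfolding sqrt_series_def
    using bounded_linear.suminf[OF bounded_op_bounded_linear[OF S] summable_sqrt_term] by simp
  ultimately show ?thesis by (simp add: A_root_def sqrt_series_def clinear_scaleR[OF L])
qed

end

lemma positive_square_root_unique:
  assumes S: "positive_op S" and Q: "positive_op Q"
    and commute: "\<And>x. S (Q x) = Q (S x)" and square: "\<And>x. S (S x) = Q (Q x)"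
  shows "S x = Q x"
proof -
  note SL = positive_clinear[OF S] and QL = positive_clinear[OF Q]
  define y where "y = S x - Q x"
  have "S y + Q y = S (S x) - S (Q x) + (Q (S x) - Q (Q x))"
    by (simp add: y_def clinear_diff[OF SL] clinear_diff[OF QL])
  also have "\<dots> = 0" by (simp add: commute square)
  finally have "cinner y (S y) + cinner y (Q y) = 0" by (metis cinner_add_right cinner_zero_right)
  hence "Re (cinner y (S y)) + Re (cinner y (Q y)) = 0" by (metis plus_complex.sel(1) zero_complex.sel(1))
  hence "Re (cinner y (S y)) = 0" "Re (cinner y (Q y)) = 0"
    using positive_Re[OF S, of y] positive_Re[OF Q, of y] by linarith+
  hence Sy: "S y = 0" and Qy: "Q y = 0" using positive_form_eq_zero S Q by blast+
  have "cinner y y = cinner y (S x) - cinner y (Q x)" by (simp add: y_def cinner_diff_right)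
  also have "cinner y (S x) = cinner (S y) x" by (simp add: positive_selfadjoint[OF S])
  also have "cinner y (Q x) = cinner (Q y) x" by (simp add: positive_selfadjoint[OF Q])
  finally have "y = 0" using Sy Qy by simp
  thus ?thesis by (simp add: y_def)
qed

lemma op_sqrt_positive_square:
  assumes A: "positive_op A"
  shows "positive_op (op_sqrt A) \<and> op_sqrt A \<circ> op_sqrt A = A"
proof -
  interpret sqrt_construction A by unfold_locales (rule A)
  have root: "positive_op A_root \<and> A_root \<circ> A_root = A"
    using A_root_positive A_root_squared by (auto simp: fun_eq_iff)
  have unique: "S = A_root" if S: "positive_op S \<and> S \<circ> S = A" for S
  proof
    fix x
    have SS: "S (S x) = A x" for x using S by (auto simp: fun_eq_iff)
    have SA: "S (A x) = A (S x)" for x by (simp flip: SS)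
    show "S x = A_root x"
    proof (rule positive_square_root_unique[where S=S and Q=A_root])
      show "positive_op S" using S by simp
      show "positive_op A_root" by (rule A_root_positive)
      have "bounded_op S" using S by (simp add: positive_op_def)
      thus "S (A_root x) = A_root (S x)" for x using SA by (rule A_root_commute)
      show "S (S x) = A_root (A_root x)" for x by (simp add: SS A_root_squared)
    qed
  qed
  have "op_sqrt A = A_root" unfolding op_sqrt_def using root unique by (rule the_equality)
  thus ?thesis using root by simp
qed

lemma op_sqrt_positive: "positive_op A \<Longrightarrow> positive_op (op_sqrt A)"
  using op_sqrt_positive_square by blast

lemma op_sqrt_squared: "positive_op A \<Longrightarrow> op_sqrt A (op_sqrt A x) = A x"
  using op_sqrt_positive_square by (metis comp_apply)

lemma op_sqrt_eq_zero_iff: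
  assumes A: "positive_op A"
  shows "op_sqrt A x = 0 \<longleftrightarrow> A x = 0"
proof
  assume "op_sqrt A x = 0"
  hence "op_sqrt A (op_sqrt A x) = 0"
    by (simp add: clinear_zero[OF positive_clinear[OF op_sqrt_positive[OF A]]])
  thus "A x = 0" by (simp add: op_sqrt_squared[OF A])
next
  assume "A x = 0"
  hence "cinner (op_sqrt A x) (op_sqrt A x) = 0"
    by (simp add: positive_selfadjoint[OF op_sqrt_positive[OF A]] op_sqrt_squared[OF A])
  thus "op_sqrt A x = 0" by simp
qed

section \<open>The closed range of a positive operator\<close>

locale positive_range =
  fixes A :: "'a::chilbert \<Rightarrow> 'a"
  assumes positive: "positive_op A"
begin

definition M :: "'a set" where "M = closure (range A)"

definition S :: "'a \<Rightarrow> 'a" where "S = op_sqrt A"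

lemma A_clinear: "clinear_op A"
  by (rule positive_clinear[OF positive])

sublocale M: closed_subspace M
  unfolding M_def by unfold_locales (auto intro: closure_csubspace csubspace_range A_clinear)

lemma S_positive: "positive_op S"
  unfolding S_def by (rule op_sqrt_positive[OF positive])

lemma S_clinear: "clinear_op S"
  by (rule positive_clinear[OF S_positive])

lemma S_squared: "S (S x) = A x"
  unfolding S_def by (rule op_sqrt_squared[OF positive])

lemma S_eq_zero_iff: "S x = 0 \<longleftrightarrow> A x = 0"
  unfolding S_def by (rule op_sqrt_eq_zero_iff[OF positive])

lemma A_in_M: "A x \<in> M"
  unfolding M_def by (simp add: closure_subset[THEN subsetD])

lemma M_subset_closure_range_S: "M \<subseteq> closure (range S)"
  unfolding M_def by (rule closure_mono) (auto simp flip: S_squared)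

lemma norm_S_power2: "(norm (S x))\<^sup>2 = Re (cinner x (A x))"
  by (simp add: positive_selfadjoint[OF S_positive] S_squared flip: Re_cinner_self)

lemma proj_M_kernel: "A (x - proj M x) = 0"
proof (rule cinner_eq_zero_imp_zero)
  fix z
  show "cinner z (A (x - proj M x)) = 0"
    using M.proj_orthogonal[OF A_in_M] by (simp add: positive_selfadjoint[OF positive, symmetric])
qed

lemma mem_M_iff_orthogonal_kernel: "x \<in> M \<longleftrightarrow> (\<forall>k. A k = 0 \<longrightarrow> cinner k x = 0)"
proof
  assume x: "x \<in> M"
  show "\<forall>k. A k = 0 \<longrightarrow> cinner k x = 0"
  proof (intro allI impI)
    fix k assume "A k = 0"
    hence "range A \<subseteq> {x. cinner k x = 0}"
      by (auto simp: positive_selfadjoint[OF positive, symmetric])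
    hence "M \<subseteq> {x. cinner k x = 0}" unfolding M_def by (rule closure_minimal[OF _ closed_cinner_eq_zero])
    thus "cinner k x = 0" using x by auto
  qed
next
  assume "\<forall>k. A k = 0 \<longrightarrow> cinner k x = 0"
  hence "cinner (x - proj M x) x = 0" using proj_M_kernel by blast
  moreover have "cinner (x - proj M x) (proj M x) = 0"
    using M.proj_orthogonal[OF M.proj_in, of x] by (metis cinner_commute complex_cnj_zero)
  ultimately have "cinner (x - proj M x) (x - proj M x) = 0" by (simp add: cinner_diff_right)
  thus "x \<in> M" using M.proj_in[of x] by simp
qed

lemma kernel_orthogonal_M: "A k = 0 \<Longrightarrow> m \<in> M \<Longrightarrow> cinner k m = 0"
  using mem_M_iff_orthogonal_kernel by blast

lemma M_inter_kernel: "m \<in> M \<Longrightarrow> A m = 0 \<Longrightarrow> m = 0"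
  using kernel_orthogonal_M[of m m] by simp

lemma S_in_M: "S x \<in> M"
  unfolding mem_M_iff_orthogonal_kernel
  by (auto simp: positive_selfadjoint[OF S_positive, symmetric] simp flip: S_eq_zero_iff)

lemma S_proj_M: "S (proj M x) = S x"
  using proj_M_kernel[of x] by (simp add: clinear_diff[OF S_clinear] S_eq_zero_iff[symmetric])

end

section \<open>Operators regular with respect to a positive operator\<close>

locale regular_positive = positive_range A for A :: "'a::chilbert \<Rightarrow> 'a" +
  fixes T :: "'a \<Rightarrow> 'a"
  assumes bounded: "bounded_op T" and regular: "regular A T"
begin

lemma A_T_eq_S_T_S: "A (T x) = S (T (S x))"
  using regular unfolding regular_def S_def by (metis comp_apply)

text \<open>\<open>S\<close> maps both \<open>S (T x)\<close> and \<open>T (S x)\<close> to \<open>A (T x)\<close>, so their difference lies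
  in the kernel of \<open>A\<close>, which is orthogonal to \<open>M\<close>.\<close>

lemma proj_T_S: "proj M (T (S x)) = S (T x)"
proof -
  have "S (S (T x) - T (S x)) = 0"
    by (simp add: clinear_diff[OF S_clinear] S_squared A_T_eq_S_T_S)
  hence "A (S (T x) - T (S x)) = 0" using S_eq_zero_iff by simp
  hence "proj M (S (T x) - T (S x)) = 0"
    by (intro M.proj_eq_zero) (metis kernel_orthogonal_M cinner_commute complex_cnj_zero)
  thus ?thesis using M.proj_id[OF S_in_M] by (simp add: M.proj_diff)
qed

lemma proj_T_A: "proj M (T (A x)) = A (T x)"
  using proj_T_S[of "S x"] by (simp add: S_squared A_T_eq_S_T_S)

lemma adj_T_in_M:
  assumes m: "m \<in> M"
  shows "adj T m \<in> M"
  unfolding mem_M_iff_orthogonal_kernel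
proof (intro allI impI)
  fix k assume "A k = 0"
  hence "S k = 0" using S_eq_zero_iff by simp
  hence "A (T k) = 0"
    by (simp add: A_T_eq_S_T_S clinear_zero[OF bounded_op_clinear[OF bounded]] clinear_zero[OF S_clinear])
  thus "cinner k (adj T m) = 0"
    using kernel_orthogonal_M[OF _ m] by (simp add: cinner_apply_adj[OF bounded, symmetric])
qed

lemma adj_T_commute_on_M:
  assumes P: "positive_op P" and PT: "\<And>x. proj M (T (P x)) = P (T x)" and m: "m \<in> M"
  shows "P (adj T m) = adj T (P m)"
proof (rule cinner_right_ext)
  fix x
  have "cinner x (P (adj T m)) = cinner (proj M (T (P x))) m"
    by (simp add: positive_selfadjoint[OF P] cinner_apply_adj[OF bounded] M.cinner_proj_left[OF m])
  also have "\<dots> = cinner x (adj T (P m))"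
    by (simp add: PT positive_selfadjoint[OF P] cinner_apply_adj[OF bounded])
  finally show "cinner x (P (adj T m)) = cinner x (adj T (P m))" .
qed

lemma S_adj_T: "m \<in> M \<Longrightarrow> S (adj T m) = adj T (S m)"
  by (rule adj_T_commute_on_M[OF S_positive proj_T_S])

lemma A_adj_T: "m \<in> M \<Longrightarrow> A (adj T m) = adj T (A m)"
  by (rule adj_T_commute_on_M[OF positive proj_T_A])

end

section \<open>Completely hyperexpansive operators regular for \<open>A\<^sub>2\<close> and \<open>A\<^sub>3\<close>\<close>

locale hyperexpansive_regular =
  fixes T :: "'a::chilbert \<Rightarrow> 'a"
  assumes bounded: "bounded_op T"
    and hyperexpansive: "completely_hyperexpansive T"
    and regular2: "regular (A_op 2 T) T"
    and regular3: "regular (A_op 3 T) T"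
begin

definition form :: "nat \<Rightarrow> 'a \<Rightarrow> real" where
  "form n x = Re (cinner x (A_op n T x))"

lemma A_op_positive: "1 \<le> n \<Longrightarrow> positive_op (A_op n T)"
  using hyperexpansive by (simp add: completely_hyperexpansive_def)

lemma form_nonneg: "1 \<le> n \<Longrightarrow> 0 \<le> form n x"
  unfolding form_def by (rule positive_Re[OF A_op_positive])

lemma form_eq_zero: "1 \<le> n \<Longrightarrow> form n x = 0 \<Longrightarrow> A_op n T x = 0"
  unfolding form_def by (rule positive_form_eq_zero[OF A_op_positive])

lemma form_Suc: "form (Suc n) x = form n x - form n (T x)"
  by (simp add: form_def A_op_Suc[OF bounded] cinner_diff_right
      cinner_apply_adj[OF bounded, symmetric])

text \<open>Telescoping \<open>form 2 = form 1 - form 1 \<circ> T\<close> along the orbit bounds the partial sums by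
  \<open>form 1 z\<close>, so the nonnegative terms are summable.\<close>

lemma form_2_orbit_tendsto_zero: "(\<lambda>n. form 2 ((T ^^ n) z)) \<longlonglongrightarrow> 0"
proof (rule summable_LIMSEQ_zero[OF summableI_nonneg_bounded])
  show "0 \<le> form 2 ((T ^^ n) z)" for n by (rule form_nonneg) simp
  have "(\<Sum>n<N. form 2 ((T ^^ n) z)) = form 1 z - form 1 ((T ^^ N) z)" for N
    by (induction N) (simp_all add: form_Suc[of 1, unfolded One_nat_def] numeral_2_eq_2)
  thus "(\<Sum>n<N. form 2 ((T ^^ n) z)) \<le> form 1 z" for N
    using form_nonneg[of 1 "(T ^^ N) z"] by simp
qed

lemma kernel_A3_eq_kernel_A2: "A_op 3 T z = 0 \<longleftrightarrow> A_op 2 T z = 0"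
proof
  assume "A_op 3 T z = 0"
  hence "form 3 z = 0" by (simp add: form_def)
  have form3: "form 3 ((T ^^ n) z) = 0" for n
  proof (induction n)
    case (Suc n)
    thus ?case
      using form_Suc[of 3 "(T ^^ n) z"] form_nonneg[of 4 "(T ^^ n) z"] form_nonneg[of 3 "(T ^^ Suc n) z"]
      by (simp add: numeral_eq_Suc)
  qed (simp add: \<open>form 3 z = 0\<close>)
  have "form 2 ((T ^^ n) z) = form 2 z" for n
    by (induction n) (use form3 form_Suc[of 2] in \<open>simp_all add: numeral_eq_Suc\<close>)
  hence "(\<lambda>n. form 2 z) \<longlonglongrightarrow> 0" using form_2_orbit_tendsto_zero[of z] by simp
  thus "A_op 2 T z = 0" by (intro form_eq_zero) (simp_all add: LIMSEQ_const_iff)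
next
  assume "A_op 2 T z = 0"
  hence "form 3 z \<le> 0"
    using form_Suc[of 2 z] form_nonneg[of 2 "T z"] by (simp add: form_def numeral_eq_Suc)
  thus "A_op 3 T z = 0" using form_nonneg[of 3 z] by (intro form_eq_zero) simp_all
qed

sublocale A2: regular_positive "A_op 2 T" T
  by unfold_locales (auto intro: A_op_positive bounded regular2)

sublocale A3: regular_positive "A_op 3 T" T
  by unfold_locales (auto intro: A_op_positive bounded regular3)

lemma A3_M_eq_A2_M: "A3.M = A2.M"
  unfolding set_eq_iff A3.mem_M_iff_orthogonal_kernel A2.mem_M_iff_orthogonal_kernel
  by (simp add: kernel_A3_eq_kernel_A2)

abbreviation "M \<equiv> A2.M"
abbreviation "S \<equiv> A2.S"
abbreviation "C \<equiv> compression M T"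

lemma compression_in_M: "C x \<in> M"
  unfolding compression_def by (rule A2.M.proj_in)

lemma compression_clinear: "clinear_op C"
  using bounded_op_clinear[OF bounded]
  by (simp add: compression_def clinear_op_def A2.M.proj_add A2.M.proj_cscale)

lemma compression_S: "C (S y) = S (T y)"
  unfolding compression_def by (rule A2.proj_T_S)

lemma compression_pow_S: "(C ^^ n) (S y) = S ((T ^^ n) y)"
  by (induction n) (simp_all add: compression_S)

lemma norm_S_power2: "(norm (S y))\<^sup>2 = form 2 y"
  unfolding form_def by (rule A2.norm_S_power2)

lemma compression_contraction: "m \<in> M \<Longrightarrow> norm (C m) \<le> norm m"
proof -
  assume m: "m \<in> M"
  have "continuous_on UNIV C"
    using bounded_linear_compose[OF A2.M.bounded_linear_proj bounded_op_bounded_linear[OF bounded]]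
    by (intro linear_continuous_on) (simp add: compression_def[abs_def])
  hence closed: "closed {x. norm (C x) \<le> norm x}"
    by (intro closed_Collect_le continuous_intros) auto
  have "form 2 (T y) \<le> form 2 y" for y
    using form_Suc[of 2 y] form_nonneg[of 3 y] by (simp add: numeral_eq_Suc)
  hence "(norm (C (S y)))\<^sup>2 \<le> (norm (S y))\<^sup>2" for y
    by (simp only: compression_S norm_S_power2)
  hence "norm (C (S y)) \<le> norm (S y)" for y by (rule power2_le_imp_le) simp
  hence "range S \<subseteq> {x. norm (C x) \<le> norm x}" by auto
  hence "closure (range S) \<subseteq> {x. norm (C x) \<le> norm x}" by (rule closure_minimal[OF _ closed])
  thus ?thesis using m A2.M_subset_closure_range_S by auto
qed

lemma compression_pow_contraction: "m \<in> M \<Longrightarrow> norm ((C ^^ n) m) \<le> norm m"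
proof (induction n)
  case (Suc n)
  have "(C ^^ n) m \<in> M" by (cases n) (use Suc compression_in_M in auto)
  thus ?case using Suc compression_contraction order_trans by fastforce
qed simp

text \<open>A nonzero vector \<open>y\<close> of an isometric part lies within \<open>\<parallel>y\<parallel>/2\<close> of some \<open>S z\<close>,
  and \<open>\<parallel>C\<^sup>n (S z)\<parallel>\<^sup>2 = form 2 (T\<^sup>n z) \<longlonglongrightarrow> 0\<close> contradicts \<open>\<parallel>C\<^sup>n y\<parallel> = \<parallel>y\<parallel>\<close>.\<close>

lemma compression_completely_non_isometric: "completely_non_isometric_on M C"
  unfolding completely_non_isometric_on_def
proof
  assume "\<exists>N. csubspace N \<and> closed N \<and> N \<subseteq> M \<and> N \<noteq> {0} \<and> C ` N \<subseteq> N
    \<and> (\<forall>x\<in>N. norm (C x) = norm x)"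
  then obtain N where N: "csubspace N" "N \<subseteq> M" "N \<noteq> {0}" "C ` N \<subseteq> N" "\<forall>x\<in>N. norm (C x) = norm x"
    by blast
  obtain y where y: "y \<in> N" "y \<noteq> 0" using N(1,3) by (auto simp: csubspace_def)
  have isometric: "(C ^^ n) y \<in> N \<and> norm ((C ^^ n) y) = norm y" for n
    by (induction n) (use y N(4,5) in auto)
  define e where "e = norm y / 2"
  have e: "e > 0" using y by (simp add: e_def)
  have "y \<in> closure (range S)" using y N(2) A2.M_subset_closure_range_S by auto
  then obtain z where z: "dist (S z) y < e" using closure_approachable e by blast
  obtain n where n: "form 2 ((T ^^ n) z) < e\<^sup>2"
    using order_tendstoD(2)[OF form_2_orbit_tendsto_zero, of "e\<^sup>2" z] e
    by (auto simp: eventually_sequentially)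
  have "(norm (S ((T ^^ n) z)))\<^sup>2 < e\<^sup>2" using n by (simp only: norm_S_power2)
  hence small: "norm ((C ^^ n) (S z)) < e"
    using e by (simp add: compression_pow_S power_less_imp_less_base)
  have "y - S z \<in> M" using y N(2) A2.S_in_M csubspace_diff[OF A2.M.subspace] by blast
  hence "norm ((C ^^ n) (y - S z)) \<le> norm (y - S z)" by (rule compression_pow_contraction)
  also have "norm (y - S z) < e" using z by (simp add: dist_norm norm_minus_commute)
  finally have "norm ((C ^^ n) (y - S z)) < e" .
  moreover have "norm y \<le> norm ((C ^^ n) (y - S z)) + norm ((C ^^ n) (S z))"
    using isometric[of n] norm_triangle_ineq[of "(C ^^ n) (y - S z)" "(C ^^ n) (S z)"]
    by (simp add: clinear_diff[OF clinear_funpow[OF compression_clinear]])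
  ultimately show False using small by (simp add: e_def)
qed

lemma adj_on_compression:
  assumes y: "y \<in> M"
  shows "adj_on M C y = adj T y"
proof -
  let ?adjoint = "\<lambda>S'. (\<forall>y\<in>M. S' y \<in> M) \<and> (\<forall>x\<in>M. \<forall>y\<in>M. cinner (C x) y = cinner x (S' y))"
  have adjoint: "?adjoint (adj T)"
  proof (intro conjI ballI)
    show "adj T y \<in> M" if "y \<in> M" for y by (rule A2.adj_T_in_M[OF that])
    fix x y assume "y \<in> M"
    thus "cinner (C x) y = cinner x (adj T y)"
      unfolding compression_def by (simp only: A2.M.cinner_proj_left cinner_apply_adj[OF bounded])
  qed
  have adj_on: "?adjoint (adj_on M C)"
    unfolding adj_on_def by (rule someI[where P="?adjoint", OF adjoint])
  have "adj_on M C y - adj T y \<in> M"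
    using adj_on adjoint y csubspace_diff[OF A2.M.subspace] by blast
  moreover have "cinner x (adj_on M C y - adj T y) = 0" if x: "x \<in> M" for x
  proof -
    have "cinner x (adj_on M C y) = cinner (C x) y" using adj_on x y by simp
    also have "\<dots> = cinner x (adj T y)" using adjoint x y by simp
    finally show ?thesis by (simp add: cinner_diff_right)
  qed
  ultimately have "cinner (adj_on M C y - adj T y) (adj_on M C y - adj T y) = 0" by blast
  thus ?thesis by simp
qed

text \<open>On \<open>M\<close> the operator \<open>defect\<close> is \<open>I - C\<^sup>*C\<close>.\<close>

definition defect :: "'a \<Rightarrow> 'a" where
  "defect x = x - adj T (proj M (T x))"

lemma defect_in_M: "m \<in> M \<Longrightarrow> defect m \<in> M"
  unfolding defect_def using A2.adj_T_in_M[OF A2.M.proj_in] csubspace_diff[OF A2.M.subspace] by blast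

lemma S_defect: "S (defect x) = defect (S x)"
  using A2.S_adj_T[OF A2.M.proj_in, of "T x"]
  by (simp add: defect_def clinear_diff[OF A2.S_clinear] A2.S_proj_M A2.proj_T_S)

lemma A3_eq_A2_defect: "A_op 3 T x = A_op 2 T (defect x)"
proof -
  have "A_op 3 T x = A_op 2 T x - adj T (A_op 2 T (T x))"
    using A_op_Suc[OF bounded, of 2 x] by (simp add: numeral_eq_Suc)
  also have "A_op 2 T (T x) = S (proj M (T (S x)))" by (simp add: A2.proj_T_S A2.S_squared[symmetric])
  also have "adj T (S (proj M (T (S x)))) = S (adj T (proj M (T (S x))))"
    by (rule A2.S_adj_T[OF A2.M.proj_in, symmetric])
  also have "A_op 2 T x = S (S x)" by (simp add: A2.S_squared)
  finally have "A_op 3 T x = S (defect (S x))" by (simp add: defect_def clinear_diff[OF A2.S_clinear])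
  also have "defect (S x) = S (defect x)" by (rule S_defect[symmetric])
  finally show ?thesis by (simp only: A2.S_squared)
qed

text \<open>Regularity for \<open>A\<^sub>3\<close> makes \<open>T\<^sup>*\<close> commute with \<open>A\<^sub>3 = A\<^sub>2 defect\<close> on \<open>M\<close>,
  regularity for \<open>A\<^sub>2\<close> makes it commute with \<open>A\<^sub>2\<close>; as \<open>A\<^sub>2\<close> is injective on \<open>M\<close>,
  \<open>T\<^sup>*\<close> commutes with \<open>defect\<close>, i.e. \<open>C\<^sup>*\<close> commutes with \<open>C\<^sup>*C\<close>.\<close>

lemma adj_T_defect:
  assumes m: "m \<in> M"
  shows "defect (adj T m) = adj T (defect m)"
proof -
  have "A_op 2 T (defect (adj T m)) = A_op 2 T (adj T (defect m))"
    using A3.A_adj_T[of m] A2.A_adj_T[OF defect_in_M[OF m]] m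
    by (simp add: A3_M_eq_A2_M A3_eq_A2_defect)
  hence "A_op 2 T (defect (adj T m) - adj T (defect m)) = 0"
    by (simp add: clinear_diff[OF A2.A_clinear])
  moreover have "defect (adj T m) - adj T (defect m) \<in> M"
    using defect_in_M A2.adj_T_in_M m csubspace_diff[OF A2.M.subspace] by blast
  ultimately have "defect (adj T m) - adj T (defect m) = 0" using A2.M_inter_kernel by blast
  thus ?thesis by simp
qed

lemma compression_quasinormal: "quasinormal_on M C"
  unfolding quasinormal_on_def
proof
  fix x assume x: "x \<in> M"
  let ?P = "proj M" and ?T' = "adj T"
  have "?P (T (?T' (?P (T x)))) = ?T' (?P (T (?P (T x))))"
  proof (rule A2.M.proj_eqI)
    show "?T' (?P (T (?P (T x)))) \<in> M" by (rule A2.adj_T_in_M[OF A2.M.proj_in])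
    fix u assume u: "u \<in> M"
    have "cinner u (T (?T' (?P (T x)))) = cinner (?T' u) (?T' (?P (T x)))"
      by (simp add: cinner_adj_apply[OF bounded])
    also have "\<dots> = cinner (?P (T (?T' u))) (T x)"
      by (simp add: cinner_apply_adj[OF bounded] A2.M.proj_selfadjoint)
    also have "\<dots> = cinner (?T' (?P (T (?T' u)))) x" by (simp add: cinner_adj_apply[OF bounded])
    also have "?T' (?P (T (?T' u))) = ?T' (?T' (?P (T u)))"
      using adj_T_defect[OF u] by (simp add: defect_def clinear_diff[OF adj_clinear[OF bounded]])
    also have "cinner (?T' (?T' (?P (T u)))) x = cinner (?P (?T' (?P (T u)))) (T x)"
      by (simp add: cinner_adj_apply[OF bounded] A2.M.proj_id[OF A2.adj_T_in_M[OF A2.M.proj_in]])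
    also have "\<dots> = cinner u (?T' (?P (T (?P (T x)))))"
      by (simp add: A2.M.proj_selfadjoint cinner_adj_apply[OF bounded] cinner_apply_adj[OF bounded])
    finally show "cinner u (T (?T' (?P (T x))) - ?T' (?P (T (?P (T x))))) = 0"
      by (simp add: cinner_diff_right)
  qed
  thus "C (adj_on M C (C x)) = adj_on M C (C (C x))"
    by (simp add: adj_on_compression compression_in_M) (simp add: compression_def)
qed

end

theorem corollary4p6:
  fixes T :: "'a::chilbert \<Rightarrow> 'a"
  assumes "bounded_op T"
    and "completely_hyperexpansive T"
    and "\<forall>j\<in>{1,2,3}. regular (A_op j T) T"
  shows "let M = closure (range (A_op 2 T)); C = compression M T in
           C ` M \<subseteq> M \<and> contraction_on M C \<and> quasinormal_on M C
           \<and> completely_non_isometric_on M C"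
proof -
  interpret hyperexpansive_regular T using assms by unfold_locales auto
  show ?thesis
    using compression_in_M compression_contraction compression_quasinormal
      compression_completely_non_isometric
    by (auto simp: Let_def A2.M_def contraction_on_def)
qed

end
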